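(* Let $a\geq 0$ and let $\{f_n, n\in\mathbb{N}\}\subset \mathcal{L}^+_a$ be a sequence that converges uniformly on compact subsets of $\mathbb{C}$ to a function $f\in\mathcal{A}_a$ which does not vanish identically. Then $\{f_n\}$ is a bounded subset of $\mathcal{A}_a$, it converges to $f$ in the topology of $\mathcal{A}_a$, and $f\in\mathcal{L}^+$.
   Context: Let $\mathcal{E}$ denote the set of all entire functions. For $b>0$ and $f\in\mathcal{E}$ put $\|f\|_b=\sup_{k\in\mathbb{N}_0} b^{-k}|f^{(k)}(0)|$. For $a\geq 0$ let $\mathcal{A}_a=\{f\in\mathcal{E}: \|f\|_b<\infty \ \forall b>a\}$ with the locally convex topology generated by the norms $\{\|\cdot\|_b: b>a\}$; a subset $B$ is bounded in $\mathcal{A}_a$ if $\sup_{f\in B}\|f\|_b<\infty$ for every $b>a$. The class $\mathcal{L}^+$ (Laguerre entire functions) consists of all entire functions of the form $f(z)=Cz^l e^{\alpha z}\prod_{j=1}^\infty(1+\beta_j z)$ with $C\in\mathbb{C}$, $l\in\mathbb{N}_0$, $\alpha\geq 0$, $\beta_j\geq\beta_{j+1}\geq 0$ and $\sum_j\beta_j<\infty$. Put $\mathcal{L}^+_a=\mathcal{L}^+\cap\mathcal{A}_a$. *)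

theory Defs
  imports "HOL-Complex_Analysis.Complex_Analysis"
begin

definition entire :: "(complex \<Rightarrow> complex) \<Rightarrow> bool" where
  "entire f \<longleftrightarrow> f holomorphic_on UNIV"

definition Anorm :: "real \<Rightarrow> (complex \<Rightarrow> complex) \<Rightarrow> ereal" where
  "Anorm b f = (SUP k::nat. ereal (norm ((deriv ^^ k) f 0) / b ^ k))"

definition A_space :: "real \<Rightarrow> (complex \<Rightarrow> complex) set" where
  "A_space a = {f. entire f \<and> (\<forall>b>a. Anorm b f < \<infinity>)}"

definition A_bounded :: "real \<Rightarrow> (complex \<Rightarrow> complex) set \<Rightarrow> bool" where
  "A_bounded a B \<longleftrightarrow> B \<subseteq> A_space a \<and> (\<forall>b>a. (SUP f\<in>B. Anorm b f) < \<infinity>)"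

text \<open>Convergence in the locally convex topology of A_a generated by the norms.\<close>
definition A_converges :: "real \<Rightarrow> (nat \<Rightarrow> complex \<Rightarrow> complex) \<Rightarrow> (complex \<Rightarrow> complex) \<Rightarrow> bool" where
  "A_converges a fs f \<longleftrightarrow> (\<forall>b>a. ((\<lambda>n. Anorm b (\<lambda>z. fs n z - f z)) \<longlongrightarrow> 0) sequentially)"

definition Laguerre :: "(complex \<Rightarrow> complex) set" where
  "Laguerre = {f. \<exists>(C::complex) (l::nat) (\<alpha>::real) (\<beta>::nat \<Rightarrow> real).
      \<alpha> \<ge> 0 \<and> (\<forall>j. \<beta> j \<ge> \<beta> (Suc j) \<and> \<beta> (Suc j) \<ge> 0) \<and> summable \<beta> \<and>
      (\<forall>z. f z = C * z ^ l * exp (of_real \<alpha> * z) * (\<Prod>j. 1 + of_real (\<beta> j) * z))}"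

definition Laguerre_a :: "real \<Rightarrow> (complex \<Rightarrow> complex) set" where
  "Laguerre_a a = Laguerre \<inter> A_space a"

end

theory Submission
  imports Defs
begin

text \<open>
  Write \<open>f_n z = C_n z^l_n exp (\<alpha>_n z) \<Prod>_j (1 + \<beta>_{n,j} z)\<close>. The entire function \<open>f \<noteq> 0\<close> vanishes
  at the origin to some finite order \<open>N\<close>, and zeros of \<open>f_n\<close> converging to the origin would raise
  this order; so along a subsequence \<open>l_n\<close> is constant, the first \<open>J\<close> of the \<open>\<beta>_{n,j}\<close> tend to
  infinity and all others stay bounded. Comparing \<open>|f_n|\<close> at \<open>\<rho>\<close> and \<open>2\<rho>\<close> on the positive axis then
  bounds \<open>\<alpha>_n + \<Sum>_{j \<ge> J} \<beta>_{n,j}\<close> and the leading coefficient renormalized by the first \<open>J\<close>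
  zeros. Along a further subsequence all these parameters converge, and the limits give a Laguerre
  factorization of \<open>f\<close> whose exponential type is at most \<open>a\<close> because \<open>f \<in> A_a\<close>. The same estimates
  bound \<open>|f_n z|\<close> by \<open>A (1 + |z|)^d exp (s |z|)\<close> for every \<open>s > a\<close>, uniformly along the
  subsequence, and Cauchy's estimates turn this into a bound on \<open>\<parallel>f_n\<parallel>_b\<close>. Since every subsequence
  has such a further subsequence, \<open>{f_n}\<close> is bounded in \<open>A_a\<close>. Finally, the bound at some
  \<open>b' \<in> (a, b)\<close> makes the high Taylor coefficients of \<open>f_n - f\<close> uniformly small in \<open>\<parallel>_\<parallel>_b\<close>, and
  locally uniform convergence handles the finitely many others.
\<close>

section \<open>Subsequences and limits\<close>

lemma bounded_seq_coordinatewise_convergent_subseq: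
  fixes v :: "nat \<Rightarrow> nat \<Rightarrow> real"
  assumes "\<And>n i. \<bar>v n i\<bar> \<le> B"
  shows "\<exists>\<psi> w. strict_mono \<psi> \<and> (\<forall>i. (\<lambda>n. v (\<psi> n) i) \<longlonglongrightarrow> w i)"
proof -
  define S where "S = PiE (UNIV::nat set) (\<lambda>i. {-B..B})"
  have "compactin (product_topology (\<lambda>i. euclidean) UNIV) S"
    unfolding S_def by (subst compactin_PiE) auto
  hence "compact S" by (simp add: euclidean_product_topology)
  hence "seq_compact S" using compact_imp_seq_compact by blast
  moreover have "v n \<in> S" for n
  proof -
    have "v n i \<in> {-B..B}" for i using assms[of n i] by (auto simp: abs_le_iff)
    thus ?thesis by (auto simp: S_def)
  qed
  ultimately obtain l r where "strict_mono r" "(v \<circ> r) \<longlonglongrightarrow> l"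
    unfolding seq_compact_def by meson
  moreover have "(\<lambda>n. v (r n) i) \<longlonglongrightarrow> l i" for i
  proof -
    have "continuous_on UNIV (\<lambda>x::nat\<Rightarrow>real. x i)" by (rule continuous_on_product_coordinates)
    hence "isCont (\<lambda>x::nat\<Rightarrow>real. x i) l" by (metis continuous_on_eq_continuous_at open_UNIV UNIV_I)
    from isCont_tendsto_compose[OF this \<open>(v \<circ> r) \<longlonglongrightarrow> l\<close>] show ?thesis by (simp add: o_def)
  qed
  ultimately show ?thesis by blast
qed

lemma bounded_parameters_convergent_subseq:
  fixes K :: "nat \<Rightarrow> complex" and a T :: "nat \<Rightarrow> real" and b :: "nat \<Rightarrow> nat \<Rightarrow> real"
  assumes "\<And>n. norm (K n) \<le> R" "\<And>n. \<bar>a n\<bar> \<le> R" "\<And>n. \<bar>T n\<bar> \<le> R" "\<And>n i. \<bar>b n i\<bar> \<le> R"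
  obtains \<psi> :: "nat \<Rightarrow> nat" and K' a' T' b' where "strict_mono \<psi>" "(\<lambda>n. K (\<psi> n)) \<longlonglongrightarrow> K'"
    "(\<lambda>n. a (\<psi> n)) \<longlonglongrightarrow> a'" "(\<lambda>n. T (\<psi> n)) \<longlonglongrightarrow> T'" "\<And>i. (\<lambda>n. b (\<psi> n) i) \<longlonglongrightarrow> b' i"
proof -
  \<comment> \<open>All parameters packed into one real sequence, so that one compactness argument suffices.\<close>
  define v where "v n i = (if i = 0 then Re (K n) else if i = 1 then Im (K n) else if i = 2 then a n
      else if i = 3 then T n else b n (i - 4))" for n i
  have "\<bar>v n i\<bar> \<le> R" for n i
    using assms abs_Re_le_cmod[of "K n"] abs_Im_le_cmod[of "K n"] unfolding v_def by (auto intro: order_trans)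
  then obtain \<psi> :: "nat \<Rightarrow> nat" and w where \<psi>: "strict_mono \<psi>" and w: "\<And>i. (\<lambda>n. v (\<psi> n) i) \<longlonglongrightarrow> w i"
    using bounded_seq_coordinatewise_convergent_subseq by blast
  have "(\<lambda>n. Complex (v (\<psi> n) 0) (v (\<psi> n) 1)) \<longlonglongrightarrow> Complex (w 0) (w 1)" by (intro tendsto_Complex w)
  moreover have "Complex (v (\<psi> n) 0) (v (\<psi> n) 1) = K (\<psi> n)" for n by (simp add: v_def)
  ultimately have "(\<lambda>n. K (\<psi> n)) \<longlonglongrightarrow> Complex (w 0) (w 1)" by simp
  moreover have "(\<lambda>n. a (\<psi> n)) \<longlonglongrightarrow> w 2" "(\<lambda>n. T (\<psi> n)) \<longlonglongrightarrow> w 3"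
    using w[of 2] w[of 3] by (simp_all add: v_def)
  moreover have "(\<lambda>n. b (\<psi> n) i) \<longlonglongrightarrow> w (i + 4)" for i using w[of "i + 4"] by (simp add: v_def)
  ultimately show ?thesis by (rule that[OF \<psi>])
qed

lemma subseq_of_not_eventually:
  assumes "\<not> eventually P sequentially"
  shows "\<exists>\<phi>::nat\<Rightarrow>nat. strict_mono \<phi> \<and> (\<forall>i. \<not> P (\<phi> i))"
proof -
  have "frequently (\<lambda>n. \<not> P n) sequentially" using assms by (simp add: not_eventually)
  hence "infinite {n. \<not> P n}" by (simp add: frequently_cofinite[symmetric] cofinite_eq_sequentially)
  from infinite_enumerate[OF this] show ?thesis by blast
qed

lemma subseq_bounded_or_filterlim_at_top:
  fixes u :: "nat \<Rightarrow> real"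
  shows "(\<exists>(\<psi>::nat\<Rightarrow>nat) B. strict_mono \<psi> \<and> (\<forall>i. u (\<psi> i) \<le> B)) \<or> filterlim u at_top sequentially"
proof (cases "filterlim u at_top sequentially")
  case False
  then obtain Z where "\<not> eventually (\<lambda>n. Z \<le> u n) sequentially" by (auto simp: filterlim_at_top)
  from subseq_of_not_eventually[OF this] obtain \<psi> :: "nat \<Rightarrow> nat" where "strict_mono \<psi>" "\<And>i. \<not> Z \<le> u (\<psi> i)" by blast
  hence "strict_mono \<psi> \<and> (\<forall>i. u (\<psi> i) \<le> Z)" by (auto simp: not_le less_imp_le)
  thus ?thesis by blast
qed simp

lemma SUP_ereal_finite_if_subseqs_bounded:
  fixes u :: "nat \<Rightarrow> ereal"
  assumes fin: "\<And>n. u n < \<infinity>"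
    and sub: "\<And>r::nat \<Rightarrow> nat. strict_mono r \<Longrightarrow> \<exists>s G. strict_mono s \<and> eventually (\<lambda>i. u (r (s i)) \<le> ereal G) sequentially"
  shows "(SUP n. u n) < \<infinity>"
proof -
  obtain r where r: "strict_mono r" "(u \<circ> r) \<longlonglongrightarrow> limsup u"
    using limsup_subseq_lim by blast
  obtain s G where s: "strict_mono s" and G: "eventually (\<lambda>i. u (r (s i)) \<le> ereal G) sequentially"
    using sub[OF r(1)] by blast
  have "(\<lambda>i. u (r (s i))) \<longlonglongrightarrow> limsup u"
    using LIMSEQ_subseq_LIMSEQ[OF r(2) s] by (simp add: o_def)
  hence "limsup u \<le> ereal G"
    using G by (intro tendsto_upperbound) auto
  hence "limsup u < ereal (G + 1)" by (simp add: le_less_trans)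
  hence "eventually (\<lambda>n. u n < ereal (G + 1)) sequentially" by (rule Limsup_lessD)
  then obtain N where N: "\<And>n. n \<ge> N \<Longrightarrow> u n < ereal (G + 1)"
    by (auto simp: eventually_at_top_linorder)
  define S where "S = insert (ereal (G + 1)) (u ` {..<N})"
  have "finite S" "S \<noteq> {}" by (auto simp: S_def)
  have "u n \<le> Max S" for n
  proof (cases "n < N")
    case True
    thus ?thesis using \<open>finite S\<close> by (intro Max_ge) (auto simp: S_def)
  next
    case False
    hence "u n \<le> ereal (G + 1)" using N by (simp add: less_imp_le)
    also have "\<dots> \<le> Max S" using \<open>finite S\<close> by (intro Max_ge) (auto simp: S_def)
    finally show ?thesis .
  qed
  hence "(SUP n. u n) \<le> Max S" by (rule SUP_least)
  also have "Max S < \<infinity>"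
    using Max_in[OF \<open>finite S\<close> \<open>S \<noteq> {}\<close>] fin by (auto simp: S_def)
  finally show ?thesis .
qed

lemma LIMSEQ_ereal_zero_if_eventually_le:
  fixes u :: "nat \<Rightarrow> ereal"
  assumes "\<And>n. 0 \<le> u n" and "\<And>\<epsilon>. \<epsilon> > 0 \<Longrightarrow> eventually (\<lambda>n. u n \<le> ereal \<epsilon>) sequentially"
  shows "u \<longlonglongrightarrow> 0"
proof (rule order_tendstoI)
  fix y :: ereal assume "y < 0"
  thus "eventually (\<lambda>n. y < u n) sequentially"
    using assms(1) by (intro always_eventually allI) (auto intro: less_le_trans)
next
  fix y :: ereal assume "0 < y"
  then obtain \<epsilon> where "0 < ereal \<epsilon>" "ereal \<epsilon> < y" using ereal_dense2 by blast
  thus "eventually (\<lambda>n. u n < y) sequentially"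
    using assms(2)[of \<epsilon>] by (auto elim: eventually_mono intro: le_less_trans)
qed

lemma tendsto_linear_ratio_at_top:
  fixes u :: "'a \<Rightarrow> real"
  assumes u: "filterlim u at_top F" and \<rho>: "\<rho> > 0" "\<rho>' \<ge> 0"
  shows "((\<lambda>n. (1 + u n * \<rho>') / (1 + u n * \<rho>)) \<longlongrightarrow> \<rho>' / \<rho>) F"
proof -
  have "((\<lambda>n. (inverse (u n) + \<rho>') / (inverse (u n) + \<rho>)) \<longlongrightarrow> (0 + \<rho>') / (0 + \<rho>)) F"
    using \<rho> by (intro tendsto_intros tendsto_inverse_0_at_top[OF u]) auto
  moreover have "eventually (\<lambda>n. (inverse (u n) + \<rho>') / (inverse (u n) + \<rho>) = (1 + u n * \<rho>') / (1 + u n * \<rho>)) F"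
    using filterlim_at_top_dense[THEN iffD1, OF u, rule_format, of 0]
  proof eventually_elim
    case (elim n)
    have "inverse (u n) + \<rho>' = (1 + u n * \<rho>') / u n" "inverse (u n) + \<rho> = (1 + u n * \<rho>) / u n"
      using elim by (auto simp: field_simps)
    moreover have "1 + u n * \<rho> > 0" using elim \<rho> by (auto intro: add_pos_pos)
    ultimately show ?case using elim by simp
  qed
  ultimately show ?thesis by (simp add: Lim_transform_eventually)
qed

lemma LIMSEQ_power_times_geometric:
  fixes q :: real
  assumes "0 \<le> q" "q < 1"
  shows "(\<lambda>k. real k ^ m * q ^ k) \<longlonglongrightarrow> 0"
proof (cases "m = 0")
  case True
  then show ?thesis using assms by (simp add: LIMSEQ_power_zero)
next
  case False
  define r where "r = root m q"
  have rm: "r ^ m = q" unfolding r_def using False assms by (simp add: real_root_pow_pos2)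
  have r0: "r \<ge> 0" unfolding r_def using assms real_root_ge_zero by blast
  have r1: "r < 1" unfolding r_def using False assms by simp
  have "(\<lambda>k. real k * r ^ k) \<longlonglongrightarrow> 0"
    using powser_times_n_limit_0[of r] r0 r1 by simp
  hence "(\<lambda>k. (real k * r ^ k) ^ m) \<longlonglongrightarrow> 0 ^ m" by (intro tendsto_intros)
  moreover have "(real k * r ^ k) ^ m = real k ^ m * q ^ k" for k
    by (simp add: power_mult_distrib rm[symmetric] power_mult[symmetric] mult.commute)
  moreover have "(0::real) ^ m = 0" using False by simp
  ultimately show ?thesis by simp
qed

lemma power_lower_bound_not_dominated:
  fixes c K \<rho>2 :: real
  assumes "c > 0" "\<rho>2 > 0" "\<And>\<rho>. 0 < \<rho> \<Longrightarrow> \<rho> \<le> \<rho>2 \<Longrightarrow> c * \<rho> ^ N \<le> K * \<rho> ^ (N + 1)"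
  shows False
proof -
  define \<rho> where "\<rho> = min \<rho>2 (c / (2 * (\<bar>K\<bar> + 1)))"
  have r0: "\<rho> > 0" using assms by (simp add: \<rho>_def)
  have "c * \<rho> ^ N \<le> K * \<rho> ^ (N + 1)" using assms(3)[OF r0] by (simp add: \<rho>_def)
  hence "c \<le> K * \<rho>" using r0 by (simp add: power_add mult_ac)
  also have "K * \<rho> \<le> \<bar>K\<bar> * (c / (2 * (\<bar>K\<bar> + 1)))"
    using r0 by (intro order.trans[OF abs_ge_self[of "K * \<rho>", unfolded abs_mult]] mult_left_mono) (auto simp: \<rho>_def)
  also have "\<dots> = (\<bar>K\<bar> / (\<bar>K\<bar> + 1)) * (c / 2)" by (simp add: field_simps)
  also have "\<dots> \<le> 1 * (c / 2)" using assms(1) by (intro mult_right_mono) auto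
  also have "\<dots> < c" using assms(1) by simp
  finally show False by simp
qed

section \<open>Products of linear factors\<close>

lemma norm_linear_factor_le:
  fixes z :: complex
  assumes "b \<ge> 0"
  shows "norm (1 + of_real b * z) \<le> 1 + b * norm z"
  using norm_triangle_ineq[of 1 "of_real b * z"] assms by (simp add: norm_mult)

lemma prod_norm_linear_factors_le_exp:
  fixes b :: "nat \<Rightarrow> real" and z :: complex
  assumes "\<And>i. i \<in> A \<Longrightarrow> b i \<ge> 0"
  shows "(\<Prod>i\<in>A. norm (1 + of_real (b i) * z)) \<le> exp (norm z * (\<Sum>i\<in>A. b i))"
proof (cases "finite A")
  case True
  have "(\<Prod>i\<in>A. norm (1 + of_real (b i) * z)) \<le> (\<Prod>i\<in>A. exp (b i * norm z))"
  proof (rule prod_mono)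
    fix i assume "i \<in> A"
    have "norm (1 + of_real (b i) * z) \<le> 1 + b i * norm z"
      using assms[OF \<open>i \<in> A\<close>] by (rule norm_linear_factor_le)
    also have "\<dots> \<le> exp (b i * norm z)" by (rule exp_ge_add_one_self)
    finally show "0 \<le> norm (1 + of_real (b i) * z) \<and> norm (1 + of_real (b i) * z) \<le> exp (b i * norm z)"
      by simp
  qed
  also have "\<dots> = exp (norm z * (\<Sum>i\<in>A. b i))"
    using True by (simp add: exp_sum sum_distrib_left mult.commute)
  finally show ?thesis .
qed simp

lemma prod_norm_plus_inverse_le:
  fixes \<beta> :: "nat \<Rightarrow> real" and z :: complex
  assumes "\<And>j. j < J \<Longrightarrow> \<beta> j \<ge> 1"
  shows "(\<Prod>j<J. norm (z + of_real (inverse (\<beta> j)))) \<le> (1 + norm z) ^ J"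
proof -
  have "(\<Prod>j<J. norm (z + of_real (inverse (\<beta> j)))) \<le> (\<Prod>j<J. 1 + norm z)"
  proof (rule prod_mono, safe)
    fix j assume "j < J"
    have "norm (z + of_real (inverse (\<beta> j))) \<le> norm z + norm (of_real (inverse (\<beta> j)) :: complex)"
      by (rule norm_triangle_ineq)
    also have "norm (of_real (inverse (\<beta> j)) :: complex) \<le> 1"
      unfolding norm_of_real using assms[OF \<open>j < J\<close>] by (simp add: inverse_le_1_iff)
    finally show "norm (z + of_real (inverse (\<beta> j))) \<le> 1 + norm z" by simp
  qed auto
  thus ?thesis by simp
qed

lemma prod_norm_linear_factors_le_power:
  fixes b :: "nat \<Rightarrow> real" and z :: complex
  assumes "\<And>i. i < M \<Longrightarrow> 0 \<le> b i \<and> b i \<le> B"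
  shows "(\<Prod>i<M. norm (1 + of_real (b i) * z)) \<le> ((1 + B) * (1 + norm z)) ^ M"
proof -
  have "(\<Prod>i<M. norm (1 + of_real (b i) * z)) \<le> (\<Prod>i<M. (1 + B) * (1 + norm z))"
  proof (rule prod_mono, safe)
    fix i assume "i < M"
    hence b: "0 \<le> b i" "b i \<le> B" using assms by auto
    have "norm (1 + of_real (b i) * z) \<le> 1 + b i * norm z"
      using b(1) by (rule norm_linear_factor_le)
    also have "\<dots> \<le> 1 + B * norm z" using b(2) by (simp add: mult_right_mono)
    also have "\<dots> \<le> (1 + B) * (1 + norm z)" using b by (simp add: algebra_simps)
    finally show "norm (1 + of_real (b i) * z) \<le> (1 + B) * (1 + norm z)" .
  qed auto
  thus ?thesis by simp
qed

lemma prod_lessThan_split: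
  fixes f :: "nat \<Rightarrow> 'a::comm_monoid_mult"
  assumes "m \<le> N"
  shows "(\<Prod>j<N. f j) = (\<Prod>j<m. f j) * (\<Prod>j\<in>{m..<N}. f j)"
proof -
  have "{..<N} = {..<m} \<union> {m..<N}" using assms by auto
  thus ?thesis by (simp add: prod.union_disjoint ivl_disj_int)
qed

lemma prod_lessThan_add:
  fixes f :: "nat \<Rightarrow> 'a::comm_monoid_mult"
  shows "(\<Prod>j<J+M. f j) = (\<Prod>j<J. f j) * (\<Prod>i<M. f (J+i))"
  by (induction M) (simp_all add: mult_ac)

lemma sum_lessThan_add:
  fixes f :: "nat \<Rightarrow> 'a::comm_monoid_add"
  shows "(\<Sum>j<J+M. f j) = (\<Sum>j<J. f j) + (\<Sum>i<M. f (J+i))"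
  by (induction M) (simp_all add: add_ac)

lemma prod_linear_factors_scaled:
  fixes \<beta> :: "nat \<Rightarrow> real" and z :: complex
  assumes "\<And>j. j < J \<Longrightarrow> \<beta> j \<noteq> 0"
  shows "(\<Prod>j<J. 1 + of_real (\<beta> j) * z) = (\<Prod>j<J. of_real (\<beta> j)) * (\<Prod>j<J. z + of_real (inverse (\<beta> j)))"
proof -
  have "(\<Prod>j<J. 1 + of_real (\<beta> j) * z) = (\<Prod>j<J. of_real (\<beta> j) * (z + of_real (inverse (\<beta> j))))"
  proof (rule prod.cong)
    fix j assume "j \<in> {..<J}"
    hence "\<beta> j \<noteq> 0" using assms by auto
    thus "1 + of_real (\<beta> j) * z = of_real (\<beta> j) * (z + of_real (inverse (\<beta> j)))"
      by (simp add: algebra_simps of_real_inverse)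
  qed simp
  thus ?thesis by (simp add: prod.distrib)
qed

lemma norm_prod_linear_factors_scaled:
  fixes \<beta> :: "nat \<Rightarrow> real" and z C :: complex
  assumes "\<And>j. j < J \<Longrightarrow> \<beta> j \<noteq> 0"
  shows "norm C * (\<Prod>j<J+M. norm (1 + of_real (\<beta> j) * z))
    = norm (C * (\<Prod>j<J. of_real (\<beta> j))) * (\<Prod>j<J. norm (z + of_real (inverse (\<beta> j)))) * (\<Prod>i<M. norm (1 + of_real (\<beta> (J+i)) * z))"
proof -
  have "norm C * (\<Prod>j<J+M. norm (1 + of_real (\<beta> j) * z)) = norm (C * (\<Prod>j<J+M. 1 + of_real (\<beta> j) * z))"
    by (simp add: norm_mult prod_norm)
  also have "(\<Prod>j<J+M. 1 + of_real (\<beta> j) * z) = (\<Prod>j<J. of_real (\<beta> j)) * (\<Prod>j<J. z + of_real (inverse (\<beta> j))) * (\<Prod>i<M. 1 + of_real (\<beta> (J+i)) * z)"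
  proof -
    have PK: "(\<Prod>j<J. 1 + of_real (\<beta> j) * z) = (\<Prod>j<J. of_real (\<beta> j)) * (\<Prod>j<J. z + of_real (inverse (\<beta> j)))"
      by (rule prod_linear_factors_scaled) (use assms in auto)
    show ?thesis by (simp only: prod_lessThan_add PK)
  qed
  finally show ?thesis by (simp add: norm_mult prod_norm mult_ac)
qed

lemma norm_prod_diff_le:
  fixes a b :: "nat \<Rightarrow> complex"
  assumes "finite A" "\<And>j. j \<in> A \<Longrightarrow> norm (a j) \<le> E j" "\<And>j. j \<in> A \<Longrightarrow> norm (b j) \<le> E j"
    "\<And>j. j \<in> A \<Longrightarrow> 1 \<le> E j"
  shows "norm ((\<Prod>j\<in>A. a j) - (\<Prod>j\<in>A. b j)) \<le> (\<Sum>j\<in>A. norm (a j - b j)) * (\<Prod>j\<in>A. E j)"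
  using assms
proof (induction A rule: finite_induct)
  case empty
  then show ?case by simp
next
  case (insert x A)
  have Ex0: "0 \<le> E x" using insert.prems(3)[of x] by simp
  have EA: "(\<Prod>j\<in>A. E j) \<ge> 1" using insert.prems(3) by (intro prod_ge_1) auto
  have nb: "norm (\<Prod>j\<in>A. a j) \<le> (\<Prod>j\<in>A. E j)"
    unfolding prod_norm[symmetric] using insert.prems(1) by (intro prod_mono) auto
  have IH: "norm ((\<Prod>j\<in>A. a j) - (\<Prod>j\<in>A. b j)) \<le> (\<Sum>j\<in>A. norm (a j - b j)) * (\<Prod>j\<in>A. E j)"
    using insert.prems by (intro insert.IH) auto
  have "(\<Prod>j\<in>insert x A. a j) - (\<Prod>j\<in>insert x A. b j)
      = (a x - b x) * (\<Prod>j\<in>A. a j) + b x * ((\<Prod>j\<in>A. a j) - (\<Prod>j\<in>A. b j))"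
    using insert.hyps by (simp add: algebra_simps)
  hence "norm ((\<Prod>j\<in>insert x A. a j) - (\<Prod>j\<in>insert x A. b j))
      \<le> norm (a x - b x) * norm (\<Prod>j\<in>A. a j) + norm (b x) * norm ((\<Prod>j\<in>A. a j) - (\<Prod>j\<in>A. b j))"
    by (metis norm_mult norm_triangle_ineq)
  also have "\<dots> \<le> norm (a x - b x) * ((\<Prod>j\<in>A. E j) * E x) + E x * ((\<Sum>j\<in>A. norm (a j - b j)) * (\<Prod>j\<in>A. E j))"
  proof (intro add_mono mult_mono)
    have "(\<Prod>j\<in>A. E j) * 1 \<le> (\<Prod>j\<in>A. E j) * E x"
      using insert.prems(3)[of x] EA by (intro mult_left_mono) auto
    with nb show "norm (\<Prod>j\<in>A. a j) \<le> (\<Prod>j\<in>A. E j) * E x" by simp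
  qed (use insert.prems IH Ex0 in auto)
  also have "\<dots> = (\<Sum>j\<in>insert x A. norm (a j - b j)) * (\<Prod>j\<in>insert x A. E j)"
    using insert.hyps by (simp add: algebra_simps)
  finally show ?case .
qed

lemma norm_one_plus_minus_exp_le:
  fixes w :: complex
  shows "norm (1 + w - exp w) \<le> (norm w)^2 * exp (norm w)"
proof -
  have sums: "(\<lambda>k. w ^ (k + 2) /\<^sub>R fact (k + 2)) sums (exp w - (\<Sum>k<2. w ^ k /\<^sub>R fact k))"
    by (intro sums_split_initial_segment exp_converges)
  have s2: "(\<lambda>k. norm w ^ k /\<^sub>R fact k) sums exp (norm w)" by (rule exp_converges)
  have sn: "summable (\<lambda>k. norm (w ^ (k + 2) /\<^sub>R fact (k + 2)))"
    using summable_norm_exp[of w]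
    by (intro summable_ignore_initial_segment) (auto simp: norm_power)
  have "exp w - 1 - w = (\<Sum>k. w ^ (k + 2) /\<^sub>R fact (k + 2))"
    using sums by (simp add: sums_iff eval_nat_numeral)
  hence "norm (1 + w - exp w) = norm (\<Sum>k. w ^ (k + 2) /\<^sub>R fact (k + 2))"
    by (metis minus_diff_eq norm_minus_cancel diff_diff_eq2 add.commute diff_diff_eq)
  also have "\<dots> \<le> (\<Sum>k. norm (w ^ (k + 2) /\<^sub>R fact (k + 2)))"
    using sn by (rule summable_norm)
  also have "\<dots> \<le> (\<Sum>k. (norm w)^2 * (norm w ^ k /\<^sub>R fact k))"
  proof (rule suminf_le)
    fix k
    have "norm (w ^ (k + 2) /\<^sub>R fact (k + 2)) = norm w ^ (k+2) / fact (k+2)"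
      unfolding norm_scaleR norm_power by (simp add: divide_inverse_commute)
    also have "\<dots> = (norm w)^2 * norm w ^ k / fact (k+2)"
      by (simp add: power_add mult_ac power2_eq_square)
    also have "\<dots> \<le> (norm w)^2 * norm w ^ k / fact k"
    proof -
      have "fact k \<le> (fact (k+2)::real)" by (rule fact_mono) simp
      thus ?thesis by (rule divide_left_mono) (auto simp del: fact_Suc)
    qed
    finally show "norm (w ^ (k + 2) /\<^sub>R fact (k + 2)) \<le> (norm w)^2 * (norm w ^ k /\<^sub>R fact k)"
      by (simp add: divide_simps)
  qed (use sn s2 in \<open>auto intro!: summable_mult simp: sums_iff\<close>)
  also have "\<dots> = (norm w)^2 * exp (norm w)"
    using s2 by (simp add: sums_iff suminf_mult)
  finally show ?thesis .
qed

lemma norm_prod_linear_factors_minus_exp_le: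
  fixes \<beta> :: "nat \<Rightarrow> real" and z :: complex
  assumes "\<And>j. \<beta> j \<ge> 0" "finite A"
  shows "norm ((\<Prod>j\<in>A. 1 + of_real (\<beta> j) * z) - exp (z * of_real (\<Sum>j\<in>A. \<beta> j)))
         \<le> (norm z)^2 * (\<Sum>j\<in>A. (\<beta> j)^2) * exp (2 * norm z * (\<Sum>j\<in>A. \<beta> j))"
proof -
  define S where "S = (\<Sum>j\<in>A. \<beta> j)"
  have S0: "S \<ge> 0" unfolding S_def using assms by (intro sum_nonneg) auto
  have bS: "\<beta> j \<le> S" if "j \<in> A" for j
    unfolding S_def using assms that by (intro member_le_sum) auto
  have e: "exp (z * of_real S) = (\<Prod>j\<in>A. exp (of_real (\<beta> j) * z))"
  proof -
    have "z * of_real S = (\<Sum>j\<in>A. of_real (\<beta> j) * z)"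
      unfolding S_def of_real_sum sum_distrib_left by (simp add: mult.commute)
    thus ?thesis using exp_sum[OF assms(2)] by simp
  qed
  have "norm ((\<Prod>j\<in>A. 1 + of_real (\<beta> j) * z) - (\<Prod>j\<in>A. exp (of_real (\<beta> j) * z)))
      \<le> (\<Sum>j\<in>A. norm ((1 + of_real (\<beta> j) * z) - exp (of_real (\<beta> j) * z))) * (\<Prod>j\<in>A. exp (\<beta> j * norm z))"
  proof (rule norm_prod_diff_le[OF assms(2)])
    fix j assume "j \<in> A"
    have "norm (1 + of_real (\<beta> j) * z) \<le> 1 + \<beta> j * norm z"
      using assms(1)[of j] by (rule norm_linear_factor_le)
    also have "\<dots> \<le> exp (\<beta> j * norm z)" by (rule exp_ge_add_one_self)
    finally show "norm (1 + of_real (\<beta> j) * z) \<le> exp (\<beta> j * norm z)" .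
    have "norm (exp (of_real (\<beta> j) * z)) \<le> exp (norm (of_real (\<beta> j) * z))" by (rule norm_exp)
    also have "norm (of_real (\<beta> j) * z) = \<beta> j * norm z" using assms(1)[of j] by (simp add: norm_mult)
    finally show "norm (exp (of_real (\<beta> j) * z)) \<le> exp (\<beta> j * norm z)" .
    show "1 \<le> exp (\<beta> j * norm z)" using assms(1)[of j] by simp
  qed
  also have "(\<Prod>j\<in>A. exp (\<beta> j * norm z)) = exp (S * norm z)"
    unfolding S_def by (simp add: exp_sum[OF assms(2), symmetric] sum_distrib_right)
  also have "(\<Sum>j\<in>A. norm ((1 + of_real (\<beta> j) * z) - exp (of_real (\<beta> j) * z)))
      \<le> (\<Sum>j\<in>A. (norm z)^2 * (\<beta> j)^2 * exp (S * norm z))"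
  proof (rule sum_mono)
    fix j assume j: "j \<in> A"
    have "norm ((1 + of_real (\<beta> j) * z) - exp (of_real (\<beta> j) * z)) \<le> (norm (of_real (\<beta> j) * z))^2 * exp (norm (of_real (\<beta> j) * z))"
      by (rule norm_one_plus_minus_exp_le)
    also have "norm (of_real (\<beta> j) * z) = \<beta> j * norm z" using assms(1)[of j] by (simp add: norm_mult)
    also have "exp (\<beta> j * norm z) \<le> exp (S * norm z)"
      using bS[OF j] by (simp add: mult_right_mono)
    hence "(\<beta> j * norm z)^2 * exp (\<beta> j * norm z) \<le> (\<beta> j * norm z)^2 * exp (S * norm z)"
      by (intro mult_left_mono) auto
    finally show "norm ((1 + of_real (\<beta> j) * z) - exp (of_real (\<beta> j) * z)) \<le> (norm z)^2 * (\<beta> j)^2 * exp (S * norm z)"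
      by (simp add: power_mult_distrib mult_ac)
  qed
  hence "(\<Sum>j\<in>A. norm ((1 + of_real (\<beta> j) * z) - exp (of_real (\<beta> j) * z))) * exp (S * norm z)
      \<le> (\<Sum>j\<in>A. (norm z)^2 * (\<beta> j)^2 * exp (S * norm z)) * exp (S * norm z)"
    by (intro mult_right_mono) auto
  also have "(\<Sum>j\<in>A. (norm z)^2 * (\<beta> j)^2 * exp (S * norm z)) * exp (S * norm z)
      = (norm z)^2 * (\<Sum>j\<in>A. (\<beta> j)^2) * (exp (S * norm z) * exp (S * norm z))"
    by (simp add: sum_distrib_right sum_distrib_left mult_ac)
  also have "exp (S * norm z) * exp (S * norm z) = exp (2 * norm z * S)"
    by (subst exp_add[symmetric]) (simp add: algebra_simps)
  finally have "norm ((\<Prod>j\<in>A. 1 + of_real (\<beta> j) * z) - exp (z * of_real S)) \<le> (norm z)^2 * (\<Sum>j\<in>A. (\<beta> j)^2) * exp (2 * norm z * S)"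
    unfolding e .
  thus ?thesis unfolding S_def .
qed

lemma convergent_prod_linear_factors:
  fixes \<beta> :: "nat \<Rightarrow> real" and z :: "'a::{real_normed_field,banach}"
  assumes "\<And>j. \<beta> j \<ge> 0" "summable \<beta>"
  shows "convergent_prod (\<lambda>j. 1 + of_real (\<beta> j) * z)"
proof -
  have "summable (\<lambda>j. norm ((1 + of_real (\<beta> j) * z) - 1))"
    using summable_mult2[OF assms(2), of "norm z"] assms(1)
    by (simp add: norm_mult)
  hence "abs_convergent_prod (\<lambda>j. 1 + of_real (\<beta> j) * z)"
    by (rule summable_imp_abs_convergent_prod)
  thus ?thesis
    by (rule abs_convergent_prod_imp_convergent_prod)
qed

lemma LIMSEQ_prod_linear_factors:
  fixes \<beta> :: "nat \<Rightarrow> real" and z :: "'a::{real_normed_field,banach}"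
  assumes "\<And>j. \<beta> j \<ge> 0" "summable \<beta>"
  shows "(\<lambda>N. \<Prod>j<N. 1 + of_real (\<beta> j) * z) \<longlonglongrightarrow> (\<Prod>j. 1 + of_real (\<beta> j) * z)"
  using convergent_prod_linear_factors[OF assms] by (intro has_prod_imp_tendsto') blast

lemma LIMSEQ_prod_linear_factors_real:
  fixes \<beta> :: "nat \<Rightarrow> real"
  assumes "\<And>j. \<beta> j \<ge> 0" "summable \<beta>"
  shows "(\<lambda>N. \<Prod>j<N. 1 + \<beta> j * \<rho>) \<longlonglongrightarrow> (\<Prod>j. 1 + \<beta> j * \<rho>)"
  using LIMSEQ_prod_linear_factors[OF assms, of \<rho>] by simp

lemma prodinf_linear_factors_of_real:
  fixes \<beta> :: "nat \<Rightarrow> real"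
  assumes "\<And>j. \<beta> j \<ge> 0" "summable \<beta>"
  shows "(\<Prod>j. 1 + of_real (\<beta> j) * of_real \<rho>) = (of_real (\<Prod>j. 1 + \<beta> j * \<rho>) :: complex)"
proof -
  have "(\<lambda>j. 1 + \<beta> j * \<rho>) has_prod (\<Prod>j. 1 + \<beta> j * \<rho>)"
    using convergent_prod_linear_factors[OF assms, of \<rho>] by auto
  hence "(\<lambda>j. of_real (1 + \<beta> j * \<rho>) :: complex) has_prod of_real (\<Prod>j. 1 + \<beta> j * \<rho>)"
    by (simp only: has_prod_of_real_iff)
  from has_prod_unique[OF this] show ?thesis by simp
qed

definition tail_sum :: "(nat \<Rightarrow> real) \<Rightarrow> nat \<Rightarrow> real" where
  "tail_sum \<beta> M = (\<Sum>j. \<beta> j) - (\<Sum>j<M. \<beta> j)"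

lemma LIMSEQ_tail_sum:
  assumes "summable \<beta>"
  shows "(\<lambda>N. \<Sum>j\<in>{M..<N}. \<beta> j) \<longlonglongrightarrow> tail_sum \<beta> M"
proof -
  have "(\<lambda>N. (\<Sum>j<N. \<beta> j) - (\<Sum>j<M. \<beta> j)) \<longlonglongrightarrow> tail_sum \<beta> M"
    unfolding tail_sum_def by (intro tendsto_diff summable_LIMSEQ assms tendsto_const)
  moreover have "eventually (\<lambda>N. (\<Sum>j<N. \<beta> j) - (\<Sum>j<M. \<beta> j) = (\<Sum>j\<in>{M..<N}. \<beta> j)) sequentially"
    using eventually_ge_at_top[of M]
  proof eventually_elim
    case (elim N)
    have "{..<N} = {..<M} \<union> {M..<N}" using elim by auto
    hence "(\<Sum>j<N. \<beta> j) = (\<Sum>j<M. \<beta> j) + (\<Sum>j\<in>{M..<N}. \<beta> j)"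
      by (simp add: sum.union_disjoint ivl_disj_int)
    thus ?case by simp
  qed
  ultimately show ?thesis by (rule Lim_transform_eventually)
qed

lemma tail_sum_nonneg:
  assumes "summable \<beta>" "\<And>j. \<beta> j \<ge> 0"
  shows "tail_sum \<beta> M \<ge> 0"
  unfolding tail_sum_def using sum_le_suminf[OF assms(1), of "{..<M}"] assms(2) by auto

lemma sum_atLeastLessThan_le_tail_sum:
  assumes "summable \<beta>" "\<And>j. \<beta> j \<ge> 0"
  shows "(\<Sum>j\<in>{M..<N}. \<beta> j) \<le> tail_sum \<beta> M"
proof (rule LIMSEQ_le_const[OF LIMSEQ_tail_sum[OF assms(1)]])
  show "\<exists>N0. \<forall>n\<ge>N0. (\<Sum>j\<in>{M..<N}. \<beta> j) \<le> (\<Sum>j\<in>{M..<n}. \<beta> j)"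
    by (rule exI[of _ N]) (auto simp: assms(2) intro!: sum_mono2)
qed

lemma tail_sum_add: "tail_sum \<beta> (J + M) = tail_sum \<beta> J - (\<Sum>i<M. \<beta> (J+i))"
  unfolding tail_sum_def sum_lessThan_add by simp

lemma norm_prodinf_minus_partial_exp_le:
  fixes \<beta> :: "nat \<Rightarrow> real" and z :: complex
  assumes nn: "\<And>j. \<beta> j \<ge> 0" and dec: "\<And>j. \<beta> (Suc j) \<le> \<beta> j" and sm: "summable \<beta>"
  shows "norm ((\<Prod>j. 1 + of_real (\<beta> j) * z) - (\<Prod>j<M. 1 + of_real (\<beta> j) * z) * exp (z * of_real (tail_sum \<beta> M)))
         \<le> (\<Prod>j<M. norm (1 + of_real (\<beta> j) * z)) * ((norm z)^2 * \<beta> M * tail_sum \<beta> M * exp (2 * norm z * tail_sum \<beta> M))"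
proof -
  define s where "s N = (\<Sum>j\<in>{M..<N}. \<beta> j)" for N
  have sle: "s N \<le> tail_sum \<beta> M" for N unfolding s_def by (rule sum_atLeastLessThan_le_tail_sum[OF sm nn])
  have lhs: "(\<lambda>N. norm ((\<Prod>j<N. 1 + of_real (\<beta> j) * z) - (\<Prod>j<M. 1 + of_real (\<beta> j) * z) * exp (z * of_real (s N))))
      \<longlonglongrightarrow> norm ((\<Prod>j. 1 + of_real (\<beta> j) * z) - (\<Prod>j<M. 1 + of_real (\<beta> j) * z) * exp (z * of_real (tail_sum \<beta> M)))"
    unfolding s_def by (intro tendsto_intros LIMSEQ_prod_linear_factors nn sm LIMSEQ_tail_sum)
  show ?thesis
  proof (rule LIMSEQ_le_const2[OF lhs], rule exI[of _ M], intro allI impI)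
    fix N assume N: "N \<ge> M"
    have "(\<Sum>j\<in>{M..<N}. (\<beta> j)^2) \<le> (\<Sum>j\<in>{M..<N}. \<beta> M * \<beta> j)"
    proof (rule sum_mono)
      fix j assume "j \<in> {M..<N}"
      hence "\<beta> j \<le> \<beta> M" using decseq_SucI[of \<beta>, OF dec] by (simp add: decseq_def)
      thus "(\<beta> j)^2 \<le> \<beta> M * \<beta> j" using nn[of j] by (simp add: power2_eq_square mult_right_mono)
    qed
    also have "\<dots> \<le> \<beta> M * tail_sum \<beta> M"
      using sle[of N] nn[of M] unfolding s_def sum_distrib_left[symmetric] by (rule mult_left_mono)
    finally have sq: "(\<Sum>j\<in>{M..<N}. (\<beta> j)^2) \<le> \<beta> M * tail_sum \<beta> M" .
    have "norm ((\<Prod>j<N. 1 + of_real (\<beta> j) * z) - (\<Prod>j<M. 1 + of_real (\<beta> j) * z) * exp (z * of_real (s N)))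
        = (\<Prod>j<M. norm (1 + of_real (\<beta> j) * z)) * norm ((\<Prod>j\<in>{M..<N}. 1 + of_real (\<beta> j) * z) - exp (z * of_real (s N)))"
      unfolding prod_lessThan_split[OF N] by (simp add: right_diff_distrib[symmetric] norm_mult prod_norm)
    also have "\<dots> \<le> (\<Prod>j<M. norm (1 + of_real (\<beta> j) * z)) * ((norm z)^2 * (\<Sum>j\<in>{M..<N}. (\<beta> j)^2) * exp (2 * norm z * s N))"
      unfolding s_def by (intro mult_left_mono norm_prod_linear_factors_minus_exp_le prod_nonneg nn) auto
    also have "\<dots> \<le> (\<Prod>j<M. norm (1 + of_real (\<beta> j) * z)) * ((norm z)^2 * (\<beta> M * tail_sum \<beta> M) * exp (2 * norm z * tail_sum \<beta> M))"
      using sq sle[of N] by (intro mult_left_mono mult_mono order.refl)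
        (auto intro!: prod_nonneg mult_nonneg_nonneg nn tail_sum_nonneg sm simp: mult_left_mono)
    finally show "norm ((\<Prod>j<N. 1 + of_real (\<beta> j) * z) - (\<Prod>j<M. 1 + of_real (\<beta> j) * z) * exp (z * of_real (s N)))
        \<le> (\<Prod>j<M. norm (1 + of_real (\<beta> j) * z)) * ((norm z)^2 * \<beta> M * tail_sum \<beta> M * exp (2 * norm z * tail_sum \<beta> M))"
      by (simp add: mult_ac)
  qed
qed

lemma norm_prodinf_le_partial_exp:
  fixes \<beta> :: "nat \<Rightarrow> real" and z :: complex
  assumes nn: "\<And>j. \<beta> j \<ge> 0" and sm: "summable \<beta>"
  shows "norm (\<Prod>j. 1 + of_real (\<beta> j) * z) \<le> (\<Prod>j<M. norm (1 + of_real (\<beta> j) * z)) * exp (norm z * tail_sum \<beta> M)"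
proof (rule LIMSEQ_le_const2[OF tendsto_norm[OF LIMSEQ_prod_linear_factors[OF nn sm]]], intro exI allI impI)
  fix N assume N: "N \<ge> M"
  have "(\<Prod>j\<in>{M..<N}. norm (1 + of_real (\<beta> j) * z)) \<le> exp (norm z * (\<Sum>j\<in>{M..<N}. \<beta> j))"
    using nn by (rule prod_norm_linear_factors_le_exp)
  also have "\<dots> \<le> exp (norm z * tail_sum \<beta> M)"
    using sum_atLeastLessThan_le_tail_sum[OF sm nn, of M N] by (simp add: mult_left_mono)
  finally show "norm (\<Prod>j<N. 1 + of_real (\<beta> j) * z) \<le> (\<Prod>j<M. norm (1 + of_real (\<beta> j) * z)) * exp (norm z * tail_sum \<beta> M)"
    unfolding prod_lessThan_split[OF N] norm_mult prod_norm[symmetric]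
    by (intro mult_left_mono) (auto intro!: prod_nonneg)
qed

lemma prod_le_prodinf_linear_factors:
  fixes \<beta> :: "nat \<Rightarrow> real"
  assumes nn: "\<And>j. \<beta> j \<ge> 0" and sm: "summable \<beta>" and "\<rho> \<ge> 0"
  shows "(\<Prod>j<m. 1 + \<beta> j * \<rho>) \<le> (\<Prod>j. 1 + \<beta> j * \<rho>)"
proof (rule prod_le_prodinf)
  show "(\<lambda>j. 1 + \<beta> j * \<rho>) has_prod (\<Prod>j. 1 + \<beta> j * \<rho>)"
    using convergent_prod_linear_factors[OF nn sm, of \<rho>] by auto
qed (use nn assms(3) in auto)

lemma one_le_prodinf_linear_factors:
  fixes \<beta> :: "nat \<Rightarrow> real"
  assumes nn: "\<And>j. \<beta> j \<ge> 0" and sm: "summable \<beta>" and "\<rho> \<ge> 0"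
  shows "1 \<le> (\<Prod>j. 1 + \<beta> j * \<rho>)"
  using prod_le_prodinf_linear_factors[OF assms, of 0] by simp

lemma prodinf_linear_factors_ratio_le:
  fixes \<beta> :: "nat \<Rightarrow> real"
  assumes nn: "\<And>j. \<beta> j \<ge> 0" and sm: "summable \<beta>" and "0 \<le> \<rho>1" "\<rho>1 \<le> \<rho>2"
  shows "(\<Prod>j. 1 + \<beta> j * \<rho>1) * (\<Prod>j<m. 1 + \<beta> j * \<rho>2) \<le> (\<Prod>j. 1 + \<beta> j * \<rho>2) * (\<Prod>j<m. 1 + \<beta> j * \<rho>1)"
proof (rule tendsto_le[OF _ tendsto_mult_right[OF LIMSEQ_prod_linear_factors_real[OF nn sm]] tendsto_mult_right[OF LIMSEQ_prod_linear_factors_real[OF nn sm]]])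
  show "eventually (\<lambda>N. (\<Prod>j<N. 1 + \<beta> j * \<rho>1) * (\<Prod>j<m. 1 + \<beta> j * \<rho>2) \<le> (\<Prod>j<N. 1 + \<beta> j * \<rho>2) * (\<Prod>j<m. 1 + \<beta> j * \<rho>1)) sequentially"
    using eventually_ge_at_top[of m]
  proof eventually_elim
    case (elim N)
    have "(\<Prod>j\<in>{m..<N}. 1 + \<beta> j * \<rho>1) \<le> (\<Prod>j\<in>{m..<N}. 1 + \<beta> j * \<rho>2)"
      using nn assms(3,4) by (intro prod_mono) (auto intro: mult_left_mono add_nonneg_nonneg)
    moreover have "0 \<le> (\<Prod>j<m. 1 + \<beta> j * \<rho>1) * (\<Prod>j<m. 1 + \<beta> j * \<rho>2)"
      using nn assms(3,4) by (intro mult_nonneg_nonneg prod_nonneg) auto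
    ultimately have "((\<Prod>j<m. 1 + \<beta> j * \<rho>1) * (\<Prod>j<m. 1 + \<beta> j * \<rho>2)) * (\<Prod>j\<in>{m..<N}. 1 + \<beta> j * \<rho>1)
       \<le> ((\<Prod>j<m. 1 + \<beta> j * \<rho>1) * (\<Prod>j<m. 1 + \<beta> j * \<rho>2)) * (\<Prod>j\<in>{m..<N}. 1 + \<beta> j * \<rho>2)"
      by (rule mult_left_mono)
    thus ?case
      unfolding prod_lessThan_split[OF elim] by (simp add: mult_ac)
  qed
qed simp

lemma linear_factor_increment:
  fixes x B \<rho>0 \<rho>1 :: real
  assumes "0 \<le> x" "x \<le> B" "0 \<le> \<rho>0" "\<rho>0 \<le> \<rho>1"
  shows "(1 + x * \<rho>0) * (1 + (\<rho>1 - \<rho>0) / (1 + B * \<rho>0) * x) \<le> 1 + x * \<rho>1"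
proof -
  have pos: "1 + B * \<rho>0 > 0" using assms by (simp add: add_pos_nonneg)
  have "(\<rho>1 - \<rho>0) / (1 + B * \<rho>0) * (1 + x * \<rho>0) \<le> (\<rho>1 - \<rho>0) / (1 + B * \<rho>0) * (1 + B * \<rho>0)"
    using assms pos by (intro mult_left_mono) (auto intro: mult_right_mono)
  also have "\<dots> = \<rho>1 - \<rho>0" using pos by simp
  finally have "(\<rho>1 - \<rho>0) / (1 + B * \<rho>0) * (1 + x * \<rho>0) * x \<le> (\<rho>1 - \<rho>0) * x"
    using assms(1) by (intro mult_right_mono) auto
  thus ?thesis by (simp add: algebra_simps)
qed

lemma prod_linear_factors_lower_bound:
  fixes \<beta> :: "nat \<Rightarrow> real"
  assumes nn: "\<And>j. \<beta> j \<ge> 0" and B: "\<And>j. j \<ge> J \<Longrightarrow> \<beta> j \<le> B"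
    and \<rho>: "0 \<le> \<rho>0" "\<rho>0 \<le> \<rho>1"
  defines "c \<equiv> (\<rho>1 - \<rho>0) / (1 + B * \<rho>0)"
  shows "(\<Prod>j<N. 1 + \<beta> j * \<rho>0) * (1 + c * (\<Sum>j\<in>{J..<N}. \<beta> j)) \<le> (\<Prod>j<N. 1 + \<beta> j * \<rho>1)"
proof (induction N)
  case (Suc N)
  have B0: "B \<ge> 0" using B[of J] nn[of J] by simp
  have c0: "c \<ge> 0" unfolding c_def using \<rho> B0 by (auto intro!: divide_nonneg_pos add_pos_nonneg)
  define s where "s = (\<Sum>j\<in>{J..<N}. \<beta> j)"
  have s0: "s \<ge> 0" unfolding s_def using nn by (intro sum_nonneg) auto
  have P0: "(\<Prod>j<N. 1 + \<beta> j * \<rho>0) \<ge> 0" using nn \<rho> by (intro prod_nonneg) auto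
  have step: "(1 + \<beta> N * \<rho>0) * (1 + c * (\<Sum>j\<in>{J..<Suc N}. \<beta> j)) \<le> (1 + c * s) * (1 + \<beta> N * \<rho>1)"
  proof (cases "N < J")
    case True
    hence "{J..<Suc N} = {J..<N}" by auto
    thus ?thesis using nn[of N] \<rho> c0 s0 unfolding s_def
      by (simp add: mult.commute mult_right_mono mult_left_mono)
  next
    case False
    hence "(\<Sum>j\<in>{J..<Suc N}. \<beta> j) = s + \<beta> N" by (simp add: s_def)
    hence "(1 + \<beta> N * \<rho>0) * (1 + c * (\<Sum>j\<in>{J..<Suc N}. \<beta> j))
        \<le> (1 + \<beta> N * \<rho>0) * ((1 + c * s) * (1 + c * \<beta> N))"
      using nn[of N] \<rho> c0 s0 by (intro mult_left_mono) (auto simp: algebra_simps)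
    also have "\<dots> = (1 + c * s) * ((1 + \<beta> N * \<rho>0) * (1 + c * \<beta> N))" by (simp only: mult_ac)
    also have "\<dots> \<le> (1 + c * s) * (1 + \<beta> N * \<rho>1)"
      using linear_factor_increment[OF nn[of N] B \<rho>, folded c_def] False c0 s0
      by (intro mult_left_mono) auto
    finally show ?thesis .
  qed
  have "(\<Prod>j<Suc N. 1 + \<beta> j * \<rho>0) * (1 + c * (\<Sum>j\<in>{J..<Suc N}. \<beta> j))
      = (\<Prod>j<N. 1 + \<beta> j * \<rho>0) * ((1 + \<beta> N * \<rho>0) * (1 + c * (\<Sum>j\<in>{J..<Suc N}. \<beta> j)))"
    by (simp add: mult_ac)
  also have "\<dots> \<le> (\<Prod>j<N. 1 + \<beta> j * \<rho>0) * (1 + c * s) * (1 + \<beta> N * \<rho>1)"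
    using mult_left_mono[OF step P0] by (simp add: mult_ac)
  also have "\<dots> \<le> (\<Prod>j<Suc N. 1 + \<beta> j * \<rho>1)"
    using Suc.IH nn[of N] \<rho> unfolding s_def by (simp add: mult_right_mono)
  finally show ?case .
qed simp

lemma prodinf_linear_factors_lower_bound:
  fixes \<beta> :: "nat \<Rightarrow> real"
  assumes nn: "\<And>j. \<beta> j \<ge> 0" and sm: "summable \<beta>" and B: "\<And>j. j \<ge> J \<Longrightarrow> \<beta> j \<le> B" and "B \<ge> 0"
    and "0 \<le> \<rho>0" "\<rho>0 \<le> \<rho>1"
  shows "(\<Prod>j. 1 + \<beta> j * \<rho>0) * (1 + (\<rho>1 - \<rho>0) / (1 + B * \<rho>0) * tail_sum \<beta> J) \<le> (\<Prod>j. 1 + \<beta> j * \<rho>1)"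
proof (rule tendsto_le[OF _ LIMSEQ_prod_linear_factors_real[OF nn sm]])
  show "(\<lambda>N. (\<Prod>j<N. 1 + \<beta> j * \<rho>0) * (1 + (\<rho>1 - \<rho>0) / (1 + B * \<rho>0) * (\<Sum>j\<in>{J..<N}. \<beta> j)))
     \<longlonglongrightarrow> (\<Prod>j. 1 + \<beta> j * \<rho>0) * (1 + (\<rho>1 - \<rho>0) / (1 + B * \<rho>0) * tail_sum \<beta> J)"
    by (intro tendsto_intros LIMSEQ_prod_linear_factors_real[OF nn sm] LIMSEQ_tail_sum[OF sm])
  show "eventually (\<lambda>N. (\<Prod>j<N. 1 + \<beta> j * \<rho>0) * (1 + (\<rho>1 - \<rho>0) / (1 + B * \<rho>0) * (\<Sum>j\<in>{J..<N}. \<beta> j))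
     \<le> (\<Prod>j<N. 1 + \<beta> j * \<rho>1)) sequentially"
    by (intro always_eventually allI prod_linear_factors_lower_bound assms)
qed simp

section \<open>Growth of entire functions and Taylor coefficients\<close>

lemma exp_one_mult_pow_le:
  assumes "k \<ge> (1::nat)"
  shows "exp 1 * real k ^ (k+1) \<le> (real k + 1) ^ (k+1)"
proof -
  have k0: "real k > 0" using assms by simp
  have "ln (real k / (real k + 1)) \<le> real k / (real k + 1) - 1"
    using k0 by (intro ln_le_minus_one) auto
  also have "\<dots> = - 1 / (real k + 1)" using k0 by (simp add: field_simps)
  finally have "ln (real k / (real k + 1)) \<le> - 1 / (real k + 1)" .
  moreover have "ln ((real k + 1) / real k) = - ln (real k / (real k + 1))"
    using k0 by (simp add: ln_div)
  ultimately have "1 / (real k + 1) \<le> ln ((real k + 1) / real k)" by simp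
  hence "1 \<le> real (k+1) * ln ((real k + 1) / real k)"
    using k0 by (simp add: field_simps)
  hence "exp 1 \<le> exp (real (k+1) * ln ((real k + 1) / real k))" by simp
  also have "\<dots> = exp (ln ((real k + 1) / real k)) ^ (k+1)"
    by (rule exp_of_nat_mult)
  also have "\<dots> = ((real k + 1) / real k) ^ (k+1)" using k0 by simp
  also have "\<dots> = (real k + 1) ^ (k+1) / real k ^ (k+1)" by (simp add: power_divide)
  finally show ?thesis using k0 by (simp add: field_simps)
qed

lemma fact_le_pow_exp:
  assumes "k \<ge> (1::nat)"
  shows "fact k \<le> real k ^ (k+1) * exp (1 - real k)"
  using assms
proof (induction k rule: nat_induct_at_least)
  case base
  then show ?case by simp
next
  case (Suc k)
  have "fact (Suc k) = (real k + 1) * fact k" by simp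
  also have "\<dots> \<le> (real k + 1) * (real k ^ (k+1) * exp (1 - real k))"
    using Suc.IH by (intro mult_left_mono) auto
  also have "\<dots> = (real k + 1) * ((exp 1 * real k ^ (k+1)) * exp (- real k))"
    by (simp add: exp_diff exp_minus field_simps)
  also have "\<dots> \<le> (real k + 1) * ((real k + 1) ^ (k+1) * exp (- real k))"
    using exp_one_mult_pow_le[OF Suc.hyps] by (intro mult_left_mono mult_right_mono) auto
  also have "\<dots> = real (Suc k) ^ (Suc k + 1) * exp (1 - real (Suc k))"
    by (simp add: algebra_simps)
  finally show ?case .
qed

lemma norm_higher_deriv_le_of_growth:
  fixes g :: "complex \<Rightarrow> complex" and A s :: real and d k :: nat
  assumes hol: "g holomorphic_on UNIV"
    and growth: "\<And>z. norm (g z) \<le> A * (1 + norm z) ^ d * exp (s * norm z)"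
    and s: "s > 0" and k: "k \<ge> 1"
  shows "norm ((deriv ^^ k) g 0) \<le> A * exp 1 * real k * (1 + real k / s) ^ d * s ^ k"
proof -
  have A: "A \<ge> 0" using growth[of 0] by (simp add: order_trans[OF norm_ge_zero])
  define r where "r = real k / s"
  have r0: "r > 0" using k s by (simp add: r_def)
  \<comment> \<open>Cauchy's estimate on the circle of radius \<open>k / s\<close>, which minimizes \<open>exp (s * r) / r ^ k\<close>.\<close>
  have "norm ((deriv ^^ k) g 0) \<le> fact k * (A * (1 + r) ^ d * exp (s * r)) / r ^ k"
  proof (rule Cauchy_inequality)
    show "g holomorphic_on ball 0 r" using hol by (rule holomorphic_on_subset) auto
    show "continuous_on (cball 0 r) g"
      using holomorphic_on_imp_continuous_on[OF hol] by (rule continuous_on_subset) auto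
  qed (use r0 growth in auto)
  also have "\<dots> \<le> (real k ^ (k+1) * exp (1 - real k)) * (A * (1 + r) ^ d * exp (s * r)) / r ^ k"
    using fact_le_pow_exp[OF k] r0 A by (intro divide_right_mono mult_right_mono) auto
  also have "\<dots> = A * exp 1 * real k * (1 + real k / s) ^ d * s ^ k"
  proof -
    have "exp (1 - real k) * exp (s * r) = exp 1" using s by (simp add: r_def flip: exp_add)
    moreover have "r ^ k = real k ^ k / s ^ k" by (simp add: r_def power_divide)
    ultimately show ?thesis using s k by (simp add: field_simps r_def)
  qed
  finally show ?thesis .
qed

lemma higher_deriv_bound_of_growth:
  fixes A s b :: real and d :: nat
  assumes s: "0 < s" "s < b" and A: "0 \<le> A"
  shows "\<exists>G. \<forall>g. g holomorphic_on UNIV \<longrightarrow> (\<forall>z. norm (g z) \<le> A * (1 + norm z) ^ d * exp (s * norm z))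
            \<longrightarrow> (\<forall>k. norm ((deriv ^^ k) g 0) \<le> G * b ^ k)"
proof -
  define q where "q = s / b"
  have q0: "0 \<le> q" and q1: "q < 1" and qnz: "q \<noteq> 0" using s by (auto simp: q_def)
  have "(\<lambda>k. real (Suc k) ^ (d+1) * q ^ (Suc k)) \<longlonglongrightarrow> 0"
    using LIMSEQ_power_times_geometric[OF q0 q1, of "d+1"] by (rule LIMSEQ_Suc)
  hence "(\<lambda>k. (real (Suc k) ^ (d+1) * q ^ (Suc k)) / q) \<longlonglongrightarrow> 0 / q" using qnz by (intro tendsto_intros)
  moreover have "(real (Suc k) ^ (d+1) * q ^ (Suc k)) / q = (real k + 1) ^ (d+1) * q ^ k" for k
    using qnz by (simp add: field_simps)
  ultimately have "(\<lambda>k. (real k + 1) ^ (d+1) * q ^ k) \<longlonglongrightarrow> 0" by simp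
  hence "Bseq (\<lambda>k. (real k + 1) ^ (d+1) * q ^ k)" by (rule convergent_imp_Bseq[OF convergentI])
  then obtain V where V: "\<And>k. norm ((real k + 1) ^ (d+1) * q ^ k) \<le> V" by (auto simp: Bseq_def)
  define G where "G = A * max 1 (exp 1 * (1 + 1/s) ^ d * V)"
  have "norm ((deriv ^^ k) g 0) \<le> G * b ^ k"
    if hol: "g holomorphic_on UNIV" and growth: "\<forall>z. norm (g z) \<le> A * (1 + norm z) ^ d * exp (s * norm z)"
    for g :: "complex \<Rightarrow> complex" and k
  proof (cases "k = 0")
    case True
    have "norm (g 0) \<le> A" using growth[rule_format, of 0] by simp
    also have "A \<le> G" unfolding G_def using A by (simp add: mult_le_cancel_left1)
    finally show ?thesis using True by simp
  next
    case False
    have "real k * (1 + real k / s) ^ d * q ^ k \<le> (real k + 1) * ((1 + 1/s) * (real k + 1)) ^ d * q ^ k"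
      using q0 s by (intro mult_right_mono mult_mono power_mono) (auto simp: field_simps)
    also have "\<dots> = (1 + 1/s) ^ d * ((real k + 1) ^ (d+1) * q ^ k)"
      by (simp add: power_mult_distrib mult_ac)
    also have "\<dots> \<le> (1 + 1/s) ^ d * V"
      using V[of k] s q0 by (intro mult_left_mono) auto
    finally have "A * exp 1 * (real k * (1 + real k / s) ^ d * q ^ k) * b ^ k \<le> A * exp 1 * ((1 + 1/s) ^ d * V) * b ^ k"
      using A s by (intro mult_right_mono mult_left_mono) auto
    moreover have "s ^ k = q ^ k * b ^ k" using s by (simp add: q_def power_divide)
    ultimately have "A * exp 1 * real k * (1 + real k / s) ^ d * s ^ k \<le> A * (exp 1 * (1 + 1/s) ^ d * V) * b ^ k"
      by (simp add: mult_ac)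
    also have "\<dots> \<le> G * b ^ k"
      unfolding G_def using A s by (intro mult_right_mono mult_left_mono) auto
    finally show ?thesis
      using norm_higher_deriv_le_of_growth[OF hol, of A d s k] growth s False by fastforce
  qed
  thus ?thesis by blast
qed

lemma norm_le_exp_of_higher_deriv_bound:
  fixes f :: "complex \<Rightarrow> complex"
  assumes hol: "f holomorphic_on UNIV" and cb: "\<And>k. norm ((deriv ^^ k) f 0) \<le> M * b ^ k" and b: "b \<ge> 0"
  shows "norm (f z) \<le> M * exp (b * norm z)"
proof -
  have sums: "(\<lambda>n. (deriv ^^ n) f 0 / fact n * (z - 0) ^ n) sums f z"
    by (rule holomorphic_power_series[of f 0 "norm z + 1"]) (use hol in \<open>auto intro: holomorphic_on_subset\<close>)
  have e: "(\<lambda>n. M * ((b * norm z) ^ n /\<^sub>R fact n)) sums (M * exp (b * norm z))"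
    by (intro sums_mult exp_converges)
  have le: "norm ((deriv ^^ n) f 0 / fact n * (z - 0) ^ n) \<le> M * ((b * norm z) ^ n /\<^sub>R fact n)" for n
  proof -
    have "norm ((deriv ^^ n) f 0 / fact n * (z - 0) ^ n) = norm ((deriv ^^ n) f 0) * norm z ^ n / fact n"
      by (simp add: norm_mult norm_divide norm_power)
    also have "\<dots> \<le> (M * b ^ n) * norm z ^ n / fact n"
      by (intro divide_right_mono mult_right_mono cb) auto
    finally show ?thesis by (simp add: power_mult_distrib divide_simps mult_ac)
  qed
  have sn: "summable (\<lambda>n. norm ((deriv ^^ n) f 0 / fact n * (z - 0) ^ n))"
    by (rule summable_comparison_test[OF _ sums_summable[OF e]]) (use le in auto)
  have "norm (f z) = norm (\<Sum>n. (deriv ^^ n) f 0 / fact n * (z - 0) ^ n)"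
    using sums by (simp add: sums_iff)
  also have "\<dots> \<le> (\<Sum>n. norm ((deriv ^^ n) f 0 / fact n * (z - 0) ^ n))"
    by (rule summable_norm[OF sn])
  also have "\<dots> \<le> (\<Sum>n. M * ((b * norm z) ^ n /\<^sub>R fact n))"
    by (rule suminf_le[OF le sn sums_summable[OF e]])
  also have "\<dots> = M * exp (b * norm z)" using e by (simp add: sums_iff)
  finally show ?thesis .
qed

lemma isCont_norm_half_lower_bound:
  fixes h :: "complex \<Rightarrow> complex"
  assumes "isCont h 0" "h 0 \<noteq> 0"
  shows "\<exists>d>0. \<forall>w. norm w < d \<longrightarrow> norm (h 0) / 2 \<le> norm (h w)"
proof -
  have "(h \<longlongrightarrow> h 0) (at 0)" using assms(1) by (simp add: isCont_def)
  hence "eventually (\<lambda>w. dist (h w) (h 0) < norm (h 0) / 2) (at 0)"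
    using assms(2) by (intro tendstoD) auto
  then obtain d where d: "d > 0" "\<And>w. w \<noteq> 0 \<Longrightarrow> dist w 0 < d \<Longrightarrow> dist (h w) (h 0) < norm (h 0) / 2"
    unfolding eventually_at by blast
  have "norm (h 0) / 2 \<le> norm (h w)" if "norm w < d" for w
  proof (cases "w = 0")
    case False
    hence "dist (h w) (h 0) < norm (h 0) / 2" using d that by auto
    hence "norm (h w - h 0) < norm (h 0) / 2" by (simp add: dist_norm)
    moreover have "norm (h 0) \<le> norm (h w) + norm (h w - h 0)"
      using norm_triangle_sub[of "h 0" "h w"] by (simp add: norm_minus_commute)
    ultimately show ?thesis by simp
  qed simp
  thus ?thesis using d(1) by blast
qed

lemma entire_power_lower_bound:
  fixes f :: "complex \<Rightarrow> complex"
  assumes hol: "f holomorphic_on UNIV" and nz: "\<exists>z. f z \<noteq> 0"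
  obtains c \<delta> N where "c > 0" "\<delta> > 0" "\<And>\<rho>. 0 < \<rho> \<Longrightarrow> \<rho> < \<delta> \<Longrightarrow> c * \<rho> ^ N \<le> norm (f (of_real \<rho>))"
proof -
  obtain n r g where r: "0 < r" and g: "g holomorphic_on ball 0 r" "g 0 \<noteq> 0"
    and fg: "\<And>w. w \<in> ball 0 r \<Longrightarrow> f w = w ^ n * g w"
  proof (cases "f 0 = 0")
    case False
    show ?thesis
    proof (rule that[of 1 f 0])
      show "f holomorphic_on ball 0 1" using hol by (rule holomorphic_on_subset) simp
    qed (use False in auto)
  next
    case True
    have "\<not> f constant_on UNIV"
    proof
      assume "f constant_on UNIV"
      then obtain c where "\<And>z. f z = c" unfolding constant_on_def by auto
      with True nz show False by auto
    qed
    then obtain n r g where gr: "0 < n" "0 < r" "ball 0 r \<subseteq> UNIV" "g holomorphic_on ball 0 r"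
        "\<And>w. w \<in> ball 0 r \<Longrightarrow> f w = (w - 0) ^ n * g w" "\<And>w. w \<in> ball 0 r \<Longrightarrow> g w \<noteq> 0"
      by (rule holomorphic_factor_zero_nonconstant[OF hol open_UNIV connected_UNIV UNIV_I True]) blast
    show ?thesis
    proof (rule that[of r g n])
      show "g 0 \<noteq> 0" using gr(2,6) by simp
    qed (use gr in auto)
  qed
  have "isCont g 0"
    using holomorphic_on_imp_continuous_on[OF g(1)] r by (simp add: continuous_on_eq_continuous_at)
  from isCont_norm_half_lower_bound[OF this g(2)] obtain d
    where d: "d > 0" "\<And>w. norm w < d \<Longrightarrow> norm (g 0) / 2 \<le> norm (g w)" by blast
  show ?thesis
  proof (rule that[of "norm (g 0) / 2" "min r d" n])
    fix \<rho> :: real assume \<rho>: "0 < \<rho>" "\<rho> < min r d"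
    have "norm (f (of_real \<rho>)) = \<rho> ^ n * norm (g (of_real \<rho>))"
      using fg[of "of_real \<rho>"] \<rho> by (simp add: norm_mult norm_power)
    moreover have "norm (g 0) / 2 \<le> norm (g (of_real \<rho>))" using d(2)[of "of_real \<rho>"] \<rho> by simp
    ultimately show "norm (g 0) / 2 * \<rho> ^ n \<le> norm (f (of_real \<rho>))"
      using \<rho> by (simp add: mult.commute mult_left_mono)
  qed (use g r d in auto)
qed

lemma Anorm_ge: "ereal (norm ((deriv ^^ k) f 0) / b ^ k) \<le> Anorm b f"
  unfolding Anorm_def by (rule SUP_upper) simp

lemma Anorm_le:
  assumes "\<And>k. norm ((deriv ^^ k) f 0) / b ^ k \<le> G"
  shows "Anorm b f \<le> ereal G"
  unfolding Anorm_def by (rule SUP_least) (use assms in simp)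

lemma Anorm_nonneg: "0 \<le> Anorm b f"
  using Anorm_ge[of 0 f b] by (rule order_trans[rotated]) simp

lemma Anorm_finite_imp_coeff_bound:
  assumes "Anorm b f < \<infinity>" "b > 0"
  shows "\<exists>M. \<forall>k. norm ((deriv ^^ k) f 0) \<le> M * b ^ k"
proof -
  have ge: "ereal (norm ((deriv ^^ k) f 0) / b ^ k) \<le> Anorm b f" for k by (rule Anorm_ge)
  have "Anorm b f \<ge> 0" using ge[of 0] by (rule order_trans[rotated]) simp
  with assms(1) obtain M where M: "Anorm b f = ereal M" by (cases "Anorm b f") auto
  have "norm ((deriv ^^ k) f 0) \<le> M * b ^ k" for k
    using ge[of k] assms(2) unfolding M by (simp add: divide_le_eq)
  thus ?thesis by blast
qed

lemma A_bounded_coeff_bound: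
  assumes "A_bounded a B" "b > a" "b > 0"
  shows "\<exists>M. \<forall>g\<in>B. \<forall>k. norm ((deriv ^^ k) g 0) \<le> M * b ^ k"
proof -
  define S where "S = (SUP g\<in>B. Anorm b g)"
  have "S < \<infinity>" using assms(1,2) by (auto simp: A_bounded_def S_def)
  hence "S \<le> ereal (real_of_ereal S)" by (cases S) auto
  hence M: "Anorm b g \<le> ereal (real_of_ereal S)" if "g \<in> B" for g
    using order_trans[OF SUP_upper[OF that]] unfolding S_def by blast
  define M where "M = real_of_ereal S"
  have "norm ((deriv ^^ k) g 0) \<le> M * b ^ k" if "g \<in> B" for g k
    using order_trans[OF Anorm_ge M[OF that]] assms(3) by (simp add: M_def divide_le_eq)
  thus ?thesis by blast
qed

lemma Anorm_le_of_circle_and_coeff_bound: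
  assumes hol: "h holomorphic_on UNIV" and circle: "\<And>z. norm z = 1 \<Longrightarrow> norm (h z) \<le> \<delta>"
    and coeff: "\<And>k. norm ((deriv ^^ k) h 0) \<le> M * c ^ k" and c: "0 < c" "c \<le> b"
  shows "Anorm b h \<le> ereal (max ((\<Sum>k<K. fact k / b ^ k) * \<delta>) (M * (c / b) ^ K))"
proof (rule Anorm_le)
  fix k
  have "0 \<le> M" using coeff[of 0] norm_ge_zero[of "h 0"] by (simp del: norm_ge_zero)
  have "0 \<le> \<delta>" using circle[of 1] by (simp add: order_trans[OF norm_ge_zero])
  have b: "b > 0" using c by simp
  show "norm ((deriv ^^ k) h 0) / b ^ k \<le> max ((\<Sum>k<K. fact k / b ^ k) * \<delta>) (M * (c / b) ^ K)"
  proof (cases "k < K")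
    case True
    have "norm ((deriv ^^ k) h 0) \<le> fact k * \<delta> / 1 ^ k"
    proof (rule Cauchy_inequality)
      show "h holomorphic_on ball 0 1" using hol by (rule holomorphic_on_subset) simp
      show "continuous_on (cball 0 1) h"
        using holomorphic_on_imp_continuous_on[OF hol] by (rule continuous_on_subset) simp
    qed (use circle in auto)
    hence "norm ((deriv ^^ k) h 0) / b ^ k \<le> (fact k / b ^ k) * \<delta>"
      using b by (simp add: divide_right_mono)
    also have "\<dots> \<le> (\<Sum>k<K. fact k / b ^ k) * \<delta>"
      using True b \<open>0 \<le> \<delta>\<close> by (intro mult_right_mono member_le_sum) auto
    finally show ?thesis by simp
  next
    case False
    have "norm ((deriv ^^ k) h 0) / b ^ k \<le> M * c ^ k / b ^ k"
      using coeff[of k] b by (intro divide_right_mono) auto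
    also have "\<dots> = M * (c / b) ^ k" by (simp add: power_divide)
    also have "\<dots> \<le> M * (c / b) ^ K"
      using False c b \<open>0 \<le> M\<close> by (intro mult_left_mono power_decreasing) auto
    finally show ?thesis by simp
  qed
qed

lemma Anorm_eventually_bounded_of_growth:
  assumes hol: "\<And>n. g n holomorphic_on UNIV" and s: "0 < s" "s < b" and A: "A \<ge> 0"
    and growth: "eventually (\<lambda>n. \<forall>z. norm (g n z) \<le> A * (1 + norm z) ^ d * exp (s * norm z)) sequentially"
  shows "\<exists>G. eventually (\<lambda>n. Anorm b (g n) \<le> ereal G) sequentially"
proof -
  obtain G where G: "\<forall>h. h holomorphic_on UNIV \<longrightarrow> (\<forall>z. norm (h z) \<le> A * (1 + norm z) ^ d * exp (s * norm z))
      \<longrightarrow> (\<forall>k. norm ((deriv ^^ k) h 0) \<le> G * b ^ k)"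
    using higher_deriv_bound_of_growth[OF s A] by blast
  have "eventually (\<lambda>n. Anorm b (g n) \<le> ereal G) sequentially"
    using growth
  proof eventually_elim
    case (elim n)
    have "norm ((deriv ^^ k) (g n) 0) \<le> G * b ^ k" for k
      using G hol elim by blast
    thus ?case using s by (intro Anorm_le) (simp add: divide_le_eq)
  qed
  thus ?thesis by blast
qed

section \<open>Sequences of Laguerre functions\<close>

definition Laguerre_seq :: "(nat \<Rightarrow> complex \<Rightarrow> complex) \<Rightarrow> (nat \<Rightarrow> complex) \<Rightarrow> (nat \<Rightarrow> nat) \<Rightarrow> (nat \<Rightarrow> real)
    \<Rightarrow> (nat \<Rightarrow> nat \<Rightarrow> real) \<Rightarrow> (complex \<Rightarrow> complex) \<Rightarrow> bool" where
  "Laguerre_seq g C l \<alpha> \<beta> f \<longleftrightarrow> (\<forall>n. \<alpha> n \<ge> 0 \<and> (\<forall>j. \<beta> n j \<ge> 0 \<and> \<beta> n (Suc j) \<le> \<beta> n j) \<and> summable (\<beta> n)) \<and>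
     (\<forall>n z. g n z = C n * z ^ l n * exp (of_real (\<alpha> n) * z) * (\<Prod>j. 1 + of_real (\<beta> n j) * z)) \<and>
     (\<forall>z. (\<lambda>n. g n z) \<longlonglongrightarrow> f z)"

lemma Laguerre_seqI:
  assumes gL: "\<And>n. g n \<in> Laguerre" and conv: "\<And>z. (\<lambda>n. g n z) \<longlonglongrightarrow> f z"
  shows "\<exists>C l \<alpha> \<beta>. Laguerre_seq g C l \<alpha> \<beta> f"
proof -
  define P where "P n C l \<alpha> \<beta> \<longleftrightarrow> (\<alpha>::real) \<ge> 0 \<and> (\<forall>j. (\<beta>::nat\<Rightarrow>real) j \<ge> \<beta> (Suc j) \<and> \<beta> (Suc j) \<ge> 0) \<and> summable \<beta> \<and>
      (\<forall>z. g n z = C * z ^ l * exp (of_real \<alpha> * z) * (\<Prod>j. 1 + of_real (\<beta> j) * z))" for n C l \<alpha> \<beta>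
  have h0: "\<forall>n. \<exists>C l \<alpha> \<beta>. P n C l \<alpha> \<beta>"
    using gL unfolding Laguerre_def P_def by blast
  from choice[OF h0] obtain C where h1: "\<forall>n. \<exists>l \<alpha> \<beta>. P n (C n) l \<alpha> \<beta>" ..
  from choice[OF h1] obtain l where h2: "\<forall>n. \<exists>\<alpha> \<beta>. P n (C n) (l n) \<alpha> \<beta>" ..
  from choice[OF h2] obtain \<alpha> where h3: "\<forall>n. \<exists>\<beta>. P n (C n) (l n) (\<alpha> n) \<beta>" ..
  from choice[OF h3] obtain \<beta> where h4: "\<forall>n. P n (C n) (l n) (\<alpha> n) (\<beta> n)" ..
  have nn: "\<beta> n j \<ge> 0" for n j
  proof (cases j)
    case 0
    then show ?thesis using h4 unfolding P_def by (meson order_trans)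
  next
    case (Suc k)
    then show ?thesis using h4 unfolding P_def by blast
  qed
  have "Laguerre_seq g C l \<alpha> \<beta> f"
    unfolding Laguerre_seq_def using h4 nn conv unfolding P_def by blast
  thus ?thesis by blast
qed

lemma Laguerre_seq_subseq:
  assumes "Laguerre_seq g C l \<alpha> \<beta> f" "strict_mono \<phi>"
  shows "Laguerre_seq (\<lambda>n. g (\<phi> n)) (\<lambda>n. C (\<phi> n)) (\<lambda>n. l (\<phi> n)) (\<lambda>n. \<alpha> (\<phi> n)) (\<lambda>n. \<beta> (\<phi> n)) f"
proof -
  have "(\<lambda>n. g (\<phi> n) z) \<longlonglongrightarrow> f z" for z
  proof -
    have "(\<lambda>n. g n z) \<longlonglongrightarrow> f z" using assms(1) unfolding Laguerre_seq_def by blast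
    from LIMSEQ_subseq_LIMSEQ[OF this assms(2)] show ?thesis by (simp add: o_def)
  qed
  thus ?thesis using assms unfolding Laguerre_seq_def by auto
qed

lemma Laguerre_seq_shift:
  assumes "Laguerre_seq g C l \<alpha> \<beta> f"
  shows "Laguerre_seq (\<lambda>n. g (n + k)) (\<lambda>n. C (n + k)) (\<lambda>n. l (n + k)) (\<lambda>n. \<alpha> (n + k)) (\<lambda>n. \<beta> (n + k)) f"
  using Laguerre_seq_subseq[OF assms, of "\<lambda>n. n + k"] by (simp add: strict_mono_def)

lemma Laguerre_seqD:
  assumes "Laguerre_seq g C l \<alpha> \<beta> f"
  shows "\<alpha> n \<ge> 0" "\<beta> n j \<ge> 0" "\<beta> n (Suc j) \<le> \<beta> n j" "summable (\<beta> n)"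
    "g n z = C n * z ^ l n * exp (of_real (\<alpha> n) * z) * (\<Prod>j. 1 + of_real (\<beta> n j) * z)"
    "(\<lambda>n. g n z) \<longlonglongrightarrow> f z"
  using assms unfolding Laguerre_seq_def by auto

lemma Laguerre_seq_norm_of_real:
  assumes H: "Laguerre_seq g C l \<alpha> \<beta> f" and "\<rho> \<ge> 0"
  shows "norm (g n (of_real \<rho>)) = norm (C n) * \<rho> ^ l n * exp (\<alpha> n * \<rho>) * (\<Prod>j. 1 + \<beta> n j * \<rho>)"
proof -
  have nn: "\<And>j. \<beta> n j \<ge> 0" and sm: "summable (\<beta> n)" using Laguerre_seqD[OF H] by auto
  have "g n (of_real \<rho>) = C n * of_real \<rho> ^ l n * exp (of_real (\<alpha> n) * of_real \<rho>) * of_real ((\<Prod>j. 1 + \<beta> n j * \<rho>))"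
    using Laguerre_seqD(5)[OF H, of n "of_real \<rho>"] prodinf_linear_factors_of_real[OF nn sm, of \<rho>] by simp
  also have "exp (of_real (\<alpha> n) * of_real \<rho>) = (of_real (exp (\<alpha> n * \<rho>)) :: complex)"
    by (simp flip: exp_of_real)
  finally have "g n (of_real \<rho>) = C n * of_real (\<rho> ^ l n * exp (\<alpha> n * \<rho>) * (\<Prod>j. 1 + \<beta> n j * \<rho>))"
    by simp
  moreover have "(\<Prod>j. 1 + \<beta> n j * \<rho>) \<ge> 0" using one_le_prodinf_linear_factors[OF nn sm \<open>\<rho> \<ge> 0\<close>] by simp
  ultimately show ?thesis using \<open>\<rho> \<ge> 0\<close> by (simp add: norm_mult norm_power abs_mult)
qed

lemma Laguerre_seq_ratio_le:
  assumes H: "Laguerre_seq g C l \<alpha> \<beta> f" and "0 \<le> \<rho>1" "\<rho>1 \<le> \<rho>2" "0 < \<rho>2"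
  shows "norm (g n (of_real \<rho>1)) * (\<Prod>j<m. 1 + \<beta> n j * \<rho>2)
      \<le> norm (g n (of_real \<rho>2)) * (\<rho>1 / \<rho>2) ^ l n * (\<Prod>j<m. 1 + \<beta> n j * \<rho>1)"
proof -
  have nn: "\<And>j. \<beta> n j \<ge> 0" and sm: "summable (\<beta> n)" and a0: "\<alpha> n \<ge> 0" using Laguerre_seqD[OF H] by auto
  have R: "(\<Prod>j. 1 + \<beta> n j * \<rho>1) * (\<Prod>j<m. 1 + \<beta> n j * \<rho>2) \<le> (\<Prod>j. 1 + \<beta> n j * \<rho>2) * (\<Prod>j<m. 1 + \<beta> n j * \<rho>1)"
    by (rule prodinf_linear_factors_ratio_le[OF nn sm assms(2,3)])
  have e: "exp (\<alpha> n * \<rho>1) \<le> exp (\<alpha> n * \<rho>2)" using a0 assms by (simp add: mult_left_mono)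
  have p: "\<rho>1 ^ l n = \<rho>2 ^ l n * (\<rho>1 / \<rho>2) ^ l n" using assms by (simp add: power_divide)
  have "norm (g n (of_real \<rho>1)) * (\<Prod>j<m. 1 + \<beta> n j * \<rho>2)
      = (norm (C n) * \<rho>2 ^ l n * (\<rho>1 / \<rho>2) ^ l n) * exp (\<alpha> n * \<rho>1) * ((\<Prod>j. 1 + \<beta> n j * \<rho>1) * (\<Prod>j<m. 1 + \<beta> n j * \<rho>2))"
    unfolding Laguerre_seq_norm_of_real[OF H assms(2)] p by (simp add: mult_ac)
  also have "\<dots> \<le> (norm (C n) * \<rho>2 ^ l n * (\<rho>1 / \<rho>2) ^ l n) * exp (\<alpha> n * \<rho>2) * ((\<Prod>j. 1 + \<beta> n j * \<rho>2) * (\<Prod>j<m. 1 + \<beta> n j * \<rho>1))"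
  proof (rule mult_mono[OF mult_left_mono[OF e] R])
    show "0 \<le> norm (C n) * \<rho>2 ^ l n * (\<rho>1 / \<rho>2) ^ l n" using assms by simp
    show "0 \<le> norm (C n) * \<rho>2 ^ l n * (\<rho>1 / \<rho>2) ^ l n * exp (\<alpha> n * \<rho>2)" using assms by simp
    show "0 \<le> (\<Prod>j. 1 + \<beta> n j * \<rho>1) * (\<Prod>j<m. 1 + \<beta> n j * \<rho>2)"
      using one_le_prodinf_linear_factors[OF nn sm assms(2)] nn assms by (intro mult_nonneg_nonneg prod_nonneg) (auto intro!: add_nonneg_nonneg)
  qed
  also have "\<dots> = norm (g n (of_real \<rho>2)) * (\<rho>1 / \<rho>2) ^ l n * (\<Prod>j<m. 1 + \<beta> n j * \<rho>1)"
    unfolding Laguerre_seq_norm_of_real[OF H order.strict_implies_order[OF assms(4)]] by (simp add: mult_ac)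
  finally show ?thesis .
qed

lemma Laguerre_seq_limit_ratio_le:
  assumes H: "Laguerre_seq g C l \<alpha> \<beta> f" and lL: "\<And>n. l n \<ge> L0"
    and div: "\<And>j. j < J \<Longrightarrow> filterlim (\<lambda>n. \<beta> n j) at_top sequentially"
    and r: "0 < \<rho>" "\<rho> \<le> \<rho>2"
  shows "norm (f (of_real \<rho>)) \<le> norm (f (of_real \<rho>2)) * (\<rho> / \<rho>2) ^ (L0 + J)"
proof -
  define q where "q = \<rho> / \<rho>2"
  have q: "0 < q" "q \<le> 1" using r by (auto simp: q_def)
  have ev: "norm (g n (of_real \<rho>)) * (\<Prod>j<J. (1 + \<beta> n j * \<rho>2) / (1 + \<beta> n j * \<rho>))
      \<le> norm (g n (of_real \<rho>2)) * q ^ L0" for n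
  proof -
    have nn: "\<And>j. \<beta> n j \<ge> 0" using Laguerre_seqD[OF H] by auto
    have pos: "(\<Prod>j<J. 1 + \<beta> n j * \<rho>) > 0" using nn r by (intro prod_pos) (auto intro: add_pos_nonneg)
    have "norm (g n (of_real \<rho>)) * (\<Prod>j<J. 1 + \<beta> n j * \<rho>2) \<le> norm (g n (of_real \<rho>2)) * q ^ l n * (\<Prod>j<J. 1 + \<beta> n j * \<rho>)"
      unfolding q_def by (rule Laguerre_seq_ratio_le[OF H]) (use r in auto)
    also have "\<dots> \<le> norm (g n (of_real \<rho>2)) * q ^ L0 * (\<Prod>j<J. 1 + \<beta> n j * \<rho>)"
      using pos q lL[of n] by (intro mult_right_mono mult_left_mono power_decreasing) auto
    finally show ?thesis using pos by (simp add: prod_dividef divide_simps mult_ac)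
  qed
  have "(\<lambda>n. norm (g n (of_real \<rho>)) * (\<Prod>j<J. (1 + \<beta> n j * \<rho>2) / (1 + \<beta> n j * \<rho>)))
      \<longlonglongrightarrow> norm (f (of_real \<rho>)) * (\<Prod>j<J. \<rho>2 / \<rho>)"
    using r by (intro tendsto_intros Laguerre_seqD(6)[OF H] tendsto_linear_ratio_at_top div) auto
  moreover have "(\<lambda>n. norm (g n (of_real \<rho>2)) * q ^ L0) \<longlonglongrightarrow> norm (f (of_real \<rho>2)) * q ^ L0"
    by (intro tendsto_intros Laguerre_seqD(6)[OF H])
  ultimately have "norm (f (of_real \<rho>)) * (\<rho>2 / \<rho>) ^ J \<le> norm (f (of_real \<rho>2)) * q ^ L0"
    using ev by (intro tendsto_le[OF _ _ _ always_eventually]) auto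
  thus ?thesis
    using r by (simp add: q_def field_simps power_divide power_add)
qed

lemma Laguerre_seq_divergent_zeros_le_order:
  assumes H: "Laguerre_seq g C l \<alpha> \<beta> f"
    and low: "c > 0" "\<delta> > 0" "\<And>\<rho>. 0 < \<rho> \<Longrightarrow> \<rho> < \<delta> \<Longrightarrow> c * \<rho> ^ N \<le> norm (f (of_real \<rho>))"
    and lL: "\<And>n. l n \<ge> L0"
    and div: "\<And>j. j < J \<Longrightarrow> filterlim (\<lambda>n. \<beta> n j) at_top sequentially"
  shows "L0 + J \<le> N"
proof (rule ccontr)
  assume "\<not> L0 + J \<le> N"
  hence LJ: "N + 1 \<le> L0 + J" by simp
  define \<rho>2 where "\<rho>2 = \<delta> / 2"
  have r2: "\<rho>2 > 0" "\<rho>2 < \<delta>" using low by (auto simp: \<rho>2_def)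
  show False
  proof (rule power_lower_bound_not_dominated[OF low(1) r2(1)])
    fix \<rho> assume r: "0 < \<rho>" "\<rho> \<le> \<rho>2"
    have "c * \<rho> ^ N \<le> norm (f (of_real \<rho>))" using low(3) r r2 by auto
    also have "\<dots> \<le> norm (f (of_real \<rho>2)) * (\<rho> / \<rho>2) ^ (L0 + J)"
      by (rule Laguerre_seq_limit_ratio_le[OF H lL div r])
    also have "\<dots> \<le> norm (f (of_real \<rho>2)) * (\<rho> / \<rho>2) ^ (N + 1)"
      using r r2 LJ by (intro mult_left_mono power_decreasing) auto
    also have "\<dots> = (norm (f (of_real \<rho>2)) / \<rho>2 ^ (N+1)) * \<rho> ^ (N + 1)"
      by (simp add: power_divide)
    finally show "c * \<rho> ^ N \<le> (norm (f (of_real \<rho>2)) / \<rho>2 ^ (N+1)) * \<rho> ^ (N + 1)" .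
  qed
qed

lemma Laguerre_seq_subseq_const_power:
  assumes H: "Laguerre_seq g C l \<alpha> \<beta> f"
    and low: "c > 0" "\<delta> > 0" "\<And>\<rho>. 0 < \<rho> \<Longrightarrow> \<rho> < \<delta> \<Longrightarrow> c * \<rho> ^ N \<le> norm (f (of_real \<rho>))"
  shows "\<exists>(\<phi>::nat\<Rightarrow>nat) l0. strict_mono \<phi> \<and> (\<forall>i. l (\<phi> i) = l0)"
proof -
  have ev: "eventually (\<lambda>n. l n \<le> N) sequentially"
  proof (rule ccontr)
    assume "\<not> eventually (\<lambda>n. l n \<le> N) sequentially"
    from subseq_of_not_eventually[OF this] obtain \<phi> :: "nat \<Rightarrow> nat" where \<phi>: "strict_mono \<phi>" "\<And>i. \<not> l (\<phi> i) \<le> N" by blast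
    have "N + 1 + 0 \<le> N"
      by (rule Laguerre_seq_divergent_zeros_le_order[OF Laguerre_seq_subseq[OF H \<phi>(1)] low]) (use \<phi>(2) in \<open>auto simp: not_le Suc_le_eq\<close>)
    thus False by simp
  qed
  then obtain n0 where n0: "\<And>n. n \<ge> n0 \<Longrightarrow> l n \<le> N" by (auto simp: eventually_at_top_linorder)
  have "\<exists>v. infinite {n. l n = v}"
  proof (rule ccontr)
    assume "\<not> (\<exists>v. infinite {n. l n = v})"
    hence fin: "finite {n. l n = v}" for v by blast
    have "{n0..} \<subseteq> (\<Union>v\<in>{..N}. {n. l n = v})" using n0 by auto
    moreover have "finite (\<Union>v\<in>{..N}. {n. l n = v})" using fin by auto
    ultimately have "finite {n0..}" by (rule finite_subset)
    thus False using infinite_Ici[of n0] by blast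
  qed
  then obtain v where "infinite {n. l n = v}" by blast
  from infinite_enumerate[OF this] show ?thesis by auto
qed

lemma Laguerre_seq_subseq_split_zeros:
  assumes H: "Laguerre_seq g C l \<alpha> \<beta> f"
    and low: "c > 0" "\<delta> > 0" "\<And>\<rho>. 0 < \<rho> \<Longrightarrow> \<rho> < \<delta> \<Longrightarrow> c * \<rho> ^ N \<le> norm (f (of_real \<rho>))"
    and lc: "\<And>n. l n = l0"
  shows "\<exists>(\<phi>::nat\<Rightarrow>nat) J B. strict_mono \<phi> \<and> (\<forall>j<J. filterlim (\<lambda>i. \<beta> (\<phi> i) j) at_top sequentially) \<and> (\<forall>i. \<beta> (\<phi> i) J \<le> B)"
proof -
  define Qs where "Qs = {J. \<exists>\<phi>::nat\<Rightarrow>nat. strict_mono \<phi> \<and> (\<forall>j<J. filterlim (\<lambda>i. \<beta> (\<phi> i) j) at_top sequentially)}"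
  have sub: "Qs \<subseteq> {..N}"
  proof
    fix J assume "J \<in> Qs"
    then obtain \<phi> :: "nat \<Rightarrow> nat" where \<phi>: "strict_mono \<phi>" "\<And>j. j < J \<Longrightarrow> filterlim (\<lambda>i. \<beta> (\<phi> i) j) at_top sequentially"
      unfolding Qs_def by blast
    have "l0 + J \<le> N"
      by (rule Laguerre_seq_divergent_zeros_le_order[OF Laguerre_seq_subseq[OF H \<phi>(1)] low]) (use lc \<phi>(2) in auto)
    thus "J \<in> {..N}" by simp
  qed
  have fin: "finite Qs" using sub finite_subset by blast
  have "0 \<in> Qs" unfolding Qs_def by (auto intro!: exI[of _ id] simp: strict_mono_def)
  hence ne: "Qs \<noteq> {}" by blast
  define J where "J = Max Qs"
  have "J \<in> Qs" unfolding J_def using fin ne by (rule Max_in)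
  then obtain \<phi> :: "nat \<Rightarrow> nat" where \<phi>: "strict_mono \<phi>" "\<And>j. j < J \<Longrightarrow> filterlim (\<lambda>i. \<beta> (\<phi> i) j) at_top sequentially"
    unfolding Qs_def by blast
  from subseq_bounded_or_filterlim_at_top[of "\<lambda>i. \<beta> (\<phi> i) J"] show ?thesis
  proof
    assume "\<exists>(\<psi>::nat\<Rightarrow>nat) B. strict_mono \<psi> \<and> (\<forall>i. \<beta> (\<phi> (\<psi> i)) J \<le> B)"
    then obtain \<psi> :: "nat \<Rightarrow> nat" and B where \<psi>: "strict_mono \<psi>" "\<And>i. \<beta> (\<phi> (\<psi> i)) J \<le> B" by blast
    have "strict_mono (\<phi> \<circ> \<psi>)" using \<phi>(1) \<psi>(1) by (rule strict_mono_o)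
    moreover have "filterlim (\<lambda>i. \<beta> ((\<phi> \<circ> \<psi>) i) j) at_top sequentially" if "j < J" for j
      using filterlim_compose[OF \<phi>(2)[OF that] filterlim_subseq[OF \<psi>(1)]] by (simp add: o_def)
    ultimately show ?thesis using \<psi>(2) by (intro exI[of _ "\<phi> \<circ> \<psi>"] exI[of _ J] exI[of _ B]) auto
  next
    assume d: "filterlim (\<lambda>i. \<beta> (\<phi> i) J) at_top sequentially"
    have "Suc J \<in> Qs" unfolding Qs_def using \<phi> d by (auto intro!: exI[of _ \<phi>] simp: less_Suc_eq)
    hence "Suc J \<le> J" unfolding J_def using fin by (simp add: Max_ge)
    thus ?thesis by simp
  qed
qed

lemma Laguerre_seq_separating_subseq:
  assumes H: "Laguerre_seq g C l \<alpha> \<beta> f"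
    and low: "c > 0" "\<delta> > 0" "\<And>\<rho>. 0 < \<rho> \<Longrightarrow> \<rho> < \<delta> \<Longrightarrow> c * \<rho> ^ N \<le> norm (f (of_real \<rho>))"
  obtains \<phi> :: "nat \<Rightarrow> nat" and l0 J B where "strict_mono \<phi>" "\<And>n. l (\<phi> n) = l0"
    "\<And>j. j < J \<Longrightarrow> filterlim (\<lambda>n. \<beta> (\<phi> n) j) at_top sequentially"
    "B \<ge> 0" "\<And>n j. J \<le> j \<Longrightarrow> \<beta> (\<phi> n) j \<le> B"
proof -
  obtain \<phi>0 :: "nat \<Rightarrow> nat" and l0 where \<phi>0: "strict_mono \<phi>0" "\<And>i. l (\<phi>0 i) = l0"
    using Laguerre_seq_subseq_const_power[OF H low] by blast
  obtain \<phi>1 :: "nat \<Rightarrow> nat" and J B1 where \<phi>1: "strict_mono \<phi>1"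
    and div1: "\<And>j. j < J \<Longrightarrow> filterlim (\<lambda>i. \<beta> (\<phi>0 (\<phi>1 i)) j) at_top sequentially"
    and bd1: "\<And>i. \<beta> (\<phi>0 (\<phi>1 i)) J \<le> B1"
    using Laguerre_seq_subseq_split_zeros[OF Laguerre_seq_subseq[OF H \<phi>0(1)] low \<phi>0(2)] by blast
  have "\<beta> (\<phi>0 (\<phi>1 n)) j \<le> max 0 B1" if "J \<le> j" for n j
  proof -
    have "decseq (\<beta> (\<phi>0 (\<phi>1 n)))" using Laguerre_seqD(3)[OF H] by (intro decseq_SucI)
    hence "\<beta> (\<phi>0 (\<phi>1 n)) j \<le> \<beta> (\<phi>0 (\<phi>1 n)) J" using that by (simp add: decseq_def)
    also have "\<dots> \<le> max 0 B1" using bd1[of n] by simp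
    finally show ?thesis .
  qed
  moreover have "strict_mono (\<lambda>n. \<phi>0 (\<phi>1 n))" using \<phi>0(1) \<phi>1(1) by (auto simp: strict_mono_def)
  ultimately show ?thesis
    by (intro that[of "\<lambda>n. \<phi>0 (\<phi>1 n)" l0 J "max 0 B1"]) (use \<phi>0(2) div1 in auto)
qed

lemma Laguerre_seq_norm_doubling:
  assumes H: "Laguerre_seq g C l \<alpha> \<beta> f" and r0: "\<rho>0 > 0"
    and Bj: "\<And>j. J \<le> j \<Longrightarrow> \<beta> n j \<le> B" and B0: "B \<ge> 0"
  shows "norm (g n (of_real \<rho>0)) * (1 + \<rho>0 / (1 + B * \<rho>0) * (\<alpha> n + tail_sum (\<beta> n) J))
    \<le> norm (g n (of_real (2 * \<rho>0)))"
proof -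
  define \<rho>1 where "\<rho>1 = 2 * \<rho>0"
  define c where "c = \<rho>0 / (1 + B * \<rho>0)"
  have c0: "c > 0" unfolding c_def using r0 B0 by (auto intro!: divide_pos_pos add_pos_nonneg)
  have cle: "c \<le> \<rho>0" unfolding c_def using r0 B0 by (simp add: divide_le_eq)
  have r1: "\<rho>1 \<ge> 0" using r0 by (simp add: \<rho>1_def)
  have nn: "\<And>j. \<beta> n j \<ge> 0" and sm: "summable (\<beta> n)" and a0: "\<alpha> n \<ge> 0" using Laguerre_seqD[OF H] by auto
  have T0: "tail_sum (\<beta> n) J \<ge> 0" by (rule tail_sum_nonneg[OF sm nn])
  have "(\<Prod>j. 1 + \<beta> n j * \<rho>0) * (1 + (\<rho>1 - \<rho>0) / (1 + B * \<rho>0) * tail_sum (\<beta> n) J) \<le> (\<Prod>j. 1 + \<beta> n j * \<rho>1)"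
    by (rule prodinf_linear_factors_lower_bound[OF nn sm _ B0]) (use Bj r0 in \<open>auto simp: \<rho>1_def\<close>)
  hence P: "(\<Prod>j. 1 + \<beta> n j * \<rho>0) * (1 + c * tail_sum (\<beta> n) J) \<le> (\<Prod>j. 1 + \<beta> n j * \<rho>1)"
    by (simp add: c_def \<rho>1_def)
  have "1 + c * \<alpha> n \<le> 1 + \<alpha> n * \<rho>0"
    using mult_right_mono[OF cle a0] by (simp add: mult.commute)
  also have "\<dots> \<le> exp (\<alpha> n * \<rho>0)" by (rule exp_ge_add_one_self)
  finally have "1 + c * \<alpha> n \<le> exp (\<alpha> n * \<rho>0)" .
  hence "exp (\<alpha> n * \<rho>0) * (1 + c * \<alpha> n) \<le> exp (\<alpha> n * \<rho>0) * exp (\<alpha> n * \<rho>0)"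
    by (intro mult_left_mono) auto
  hence E: "exp (\<alpha> n * \<rho>0) * (1 + c * \<alpha> n) \<le> exp (\<alpha> n * \<rho>1)"
    by (simp add: \<rho>1_def exp_add[symmetric] algebra_simps)
  have pw: "\<rho>0 ^ l n \<le> \<rho>1 ^ l n" using r0 by (intro power_mono) (auto simp: \<rho>1_def)
  have P0: "(\<Prod>j. 1 + \<beta> n j * \<rho>0) \<ge> 0"
    using one_le_prodinf_linear_factors[OF nn sm, of \<rho>0] r0 by linarith
  have "norm (g n (of_real \<rho>0)) * (1 + c * (\<alpha> n + tail_sum (\<beta> n) J))
      \<le> norm (g n (of_real \<rho>0)) * ((1 + c * \<alpha> n) * (1 + c * tail_sum (\<beta> n) J))"
    using c0 a0 T0 by (intro mult_left_mono) (auto simp: algebra_simps)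
  also have "\<dots> = norm (C n) * \<rho>0 ^ l n * (exp (\<alpha> n * \<rho>0) * (1 + c * \<alpha> n))
      * ((\<Prod>j. 1 + \<beta> n j * \<rho>0) * (1 + c * tail_sum (\<beta> n) J))"
    unfolding Laguerre_seq_norm_of_real[OF H order.strict_implies_order[OF r0]] by (simp add: mult_ac)
  also have "\<dots> \<le> norm (C n) * \<rho>1 ^ l n * exp (\<alpha> n * \<rho>1) * (\<Prod>j. 1 + \<beta> n j * \<rho>1)"
    using pw E P c0 a0 T0 P0 r0 zero_le_power[OF r1, of "l n"]
    by (intro mult_mono) (auto intro!: mult_nonneg_nonneg)
  also have "\<dots> = norm (g n (of_real \<rho>1))"
    by (rule Laguerre_seq_norm_of_real[OF H r1, symmetric])
  finally show ?thesis unfolding c_def \<rho>1_def .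
qed

lemma Laguerre_seq_norm_lower_bound:
  assumes H: "Laguerre_seq g C l \<alpha> \<beta> f" and r0: "\<rho>0 \<ge> 0"
  shows "norm (C n * (\<Prod>j<J. of_real (\<beta> n j))) * \<rho>0 ^ (l n + J) \<le> norm (g n (of_real \<rho>0))"
proof -
  have nn: "\<And>j. \<beta> n j \<ge> 0" and sm: "summable (\<beta> n)" and a0: "\<alpha> n \<ge> 0" using Laguerre_seqD[OF H] by auto
  have "(\<Prod>j<J. \<beta> n j) * \<rho>0 ^ J = (\<Prod>j<J. \<beta> n j * \<rho>0)" by (simp add: prod.distrib)
  also have "\<dots> \<le> (\<Prod>j<J. 1 + \<beta> n j * \<rho>0)" using nn r0 by (intro prod_mono) auto
  also have "\<dots> \<le> (\<Prod>j. 1 + \<beta> n j * \<rho>0)" using r0 by (intro prod_le_prodinf_linear_factors[OF nn sm])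
  finally have P: "(\<Prod>j<J. \<beta> n j) * \<rho>0 ^ J \<le> (\<Prod>j. 1 + \<beta> n j * \<rho>0)" .
  have "norm (C n * (\<Prod>j<J. of_real (\<beta> n j))) = norm (C n) * (\<Prod>j<J. \<beta> n j)"
    using nn by (simp add: norm_mult prod_norm[symmetric])
  hence "norm (C n * (\<Prod>j<J. of_real (\<beta> n j))) * \<rho>0 ^ (l n + J) = norm (C n) * \<rho>0 ^ l n * 1 * ((\<Prod>j<J. \<beta> n j) * \<rho>0 ^ J)"
    by (simp add: power_add mult_ac)
  also have "\<dots> \<le> norm (C n) * \<rho>0 ^ l n * exp (\<alpha> n * \<rho>0) * (\<Prod>j. 1 + \<beta> n j * \<rho>0)"
    using P a0 r0 nn by (intro mult_mono mult_left_mono) (auto intro!: prod_nonneg mult_nonneg_nonneg)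
  also have "\<dots> = norm (g n (of_real \<rho>0))"
    unfolding Laguerre_seq_norm_of_real[OF H r0] ..
  finally show ?thesis .
qed

lemma Laguerre_seq_exponent_bounded:
  assumes H: "Laguerre_seq g C l \<alpha> \<beta> f" and r0: "\<rho>0 > 0" and fnz: "f (of_real \<rho>0) \<noteq> 0"
    and Bj: "\<And>n j. J \<le> j \<Longrightarrow> \<beta> n j \<le> B" and B0: "B \<ge> 0" and lc: "\<And>n. l n = l0"
  shows "\<exists>SB KB. eventually (\<lambda>n. \<alpha> n + tail_sum (\<beta> n) J \<le> SB \<and> norm (C n * (\<Prod>j<J. of_real (\<beta> n j))) \<le> KB) sequentially"
proof -
  define c where "c = \<rho>0 / (1 + B * \<rho>0)"
  have c0: "c > 0" unfolding c_def using r0 B0 by (auto intro!: divide_pos_pos add_pos_nonneg)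
  define F0 where "F0 = norm (f (of_real \<rho>0))"
  define F1 where "F1 = norm (f (of_real (2 * \<rho>0)))"
  have F0: "F0 > 0" using fnz by (simp add: F0_def)
  have t0: "(\<lambda>n. norm (g n (of_real \<rho>0))) \<longlonglongrightarrow> F0" unfolding F0_def by (intro tendsto_intros Laguerre_seqD(6)[OF H])
  have t1: "(\<lambda>n. norm (g n (of_real (2 * \<rho>0)))) \<longlonglongrightarrow> F1" unfolding F1_def by (intro tendsto_intros Laguerre_seqD(6)[OF H])
  have "eventually (\<lambda>n. norm (g n (of_real \<rho>0)) > F0 / 2) sequentially"
    using order_tendstoD(1)[OF t0, of "F0 / 2"] F0 by simp
  moreover have "eventually (\<lambda>n. norm (g n (of_real \<rho>0)) < F0 + 1) sequentially"
    using order_tendstoD(2)[OF t0] by simp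
  moreover have "eventually (\<lambda>n. norm (g n (of_real (2 * \<rho>0))) < F1 + 1) sequentially"
    using order_tendstoD(2)[OF t1] by simp
  ultimately have "eventually (\<lambda>n. \<alpha> n + tail_sum (\<beta> n) J \<le> ((F1 + 1) / (F0 / 2) - 1) / c \<and>
      norm (C n * (\<Prod>j<J. of_real (\<beta> n j))) \<le> (F0 + 1) / \<rho>0 ^ (l0 + J)) sequentially"
  proof eventually_elim
    case (elim n)
    have T0: "\<alpha> n + tail_sum (\<beta> n) J \<ge> 0"
      using Laguerre_seqD[OF H, of n] tail_sum_nonneg[of "\<beta> n" J] by (auto intro: add_nonneg_nonneg)
    have "F0 / 2 * (1 + c * (\<alpha> n + tail_sum (\<beta> n) J)) \<le> norm (g n (of_real \<rho>0)) * (1 + c * (\<alpha> n + tail_sum (\<beta> n) J))"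
      using elim c0 T0 by (intro mult_right_mono) auto
    also have "\<dots> \<le> F1 + 1"
      using Laguerre_seq_norm_doubling[where n=n and J=J, OF H r0 Bj B0] elim unfolding c_def by force
    finally have "1 + c * (\<alpha> n + tail_sum (\<beta> n) J) \<le> (F1 + 1) / (F0 / 2)"
      using F0 by (simp add: field_simps)
    hence "\<alpha> n + tail_sum (\<beta> n) J \<le> ((F1 + 1) / (F0 / 2) - 1) / c" using c0 by (simp add: field_simps)
    moreover have "norm (C n * (\<Prod>j<J. of_real (\<beta> n j))) * \<rho>0 ^ (l0 + J) \<le> F0 + 1"
      using Laguerre_seq_norm_lower_bound[OF H, of \<rho>0 n J] r0 elim lc[of n] by simp
    hence "norm (C n * (\<Prod>j<J. of_real (\<beta> n j))) \<le> (F0 + 1) / \<rho>0 ^ (l0 + J)" using r0 by (simp add: field_simps)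
    ultimately show ?case by simp
  qed
  thus ?thesis by blast
qed

lemma norm_Laguerre_of_real_ge:
  fixes K :: complex and b :: "nat \<Rightarrow> real"
  assumes b0: "\<And>i. b i \<ge> 0" and smb: "summable b" and \<rho>: "\<rho> \<ge> 1"
  shows "norm K * exp (\<tau> * \<rho>)
    \<le> norm (K * of_real \<rho> ^ L * exp (of_real \<tau> * of_real \<rho>) * (\<Prod>i. 1 + of_real (b i) * of_real \<rho>))"
proof -
  have P: "(\<Prod>i. 1 + b i * \<rho>) \<ge> 1" using one_le_prodinf_linear_factors[OF b0 smb] \<rho> by simp
  have "1 * 1 \<le> \<rho> ^ L * (\<Prod>i. 1 + b i * \<rho>)"
    using \<rho> P by (intro mult_mono) auto
  hence "norm K * exp (\<tau> * \<rho>) * 1 \<le> norm K * exp (\<tau> * \<rho>) * (\<rho> ^ L * (\<Prod>i. 1 + b i * \<rho>))"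
    by (intro mult_left_mono) auto
  also have "\<dots> = norm (K * of_real \<rho> ^ L * exp (of_real \<tau> * of_real \<rho>) * (\<Prod>i. 1 + of_real (b i) * of_real \<rho>))"
    using \<rho> P unfolding prodinf_linear_factors_of_real[OF b0 smb]
    by (simp add: norm_mult norm_power mult_ac flip: exp_of_real)
  finally show ?thesis by simp
qed

lemma Laguerre_exponent_le:
  fixes K :: complex and L :: nat and \<tau> :: real and b :: "nat \<Rightarrow> real"
  assumes rep: "\<And>z. f z = K * z ^ L * exp (of_real \<tau> * z) * (\<Prod>i. 1 + of_real (b i) * z)"
    and b0: "\<And>i. b i \<ge> 0" and smb: "summable b"
    and fA: "f \<in> A_space a" and a0: "a \<ge> 0" and fnz: "\<exists>z. f z \<noteq> 0"
  shows "\<tau> \<le> a"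
proof (rule ccontr)
  assume "\<not> \<tau> \<le> a"
  define c where "c = (a + \<tau>) / 2"
  have c: "c > a" "c > 0" "c < \<tau>" using \<open>\<not> \<tau> \<le> a\<close> a0 by (auto simp: c_def)
  have K0: "norm K > 0" using fnz rep by (cases "K = 0") auto
  have hol: "f holomorphic_on UNIV" and fin: "Anorm c f < \<infinity>"
    using fA c unfolding A_space_def entire_def by auto
  from Anorm_finite_imp_coeff_bound[OF fin c(2)]
  obtain M where M: "\<And>k. norm ((deriv ^^ k) f 0) \<le> M * c ^ k" by blast
  define t where "t = \<tau> - c"
  have t0: "t > 0" using c by (simp add: t_def)
  have main: "norm K * (1 + t * \<rho>) \<le> M" if \<rho>: "\<rho> \<ge> 1" for \<rho>
  proof -
    have "norm K * exp (\<tau> * \<rho>) \<le> norm (f (of_real \<rho>))"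
      unfolding rep by (rule norm_Laguerre_of_real_ge[OF b0 smb \<rho>])
    also have "\<dots> \<le> M * exp (c * \<rho>)"
      using norm_le_exp_of_higher_deriv_bound[OF hol M, of "of_real \<rho>"] c \<rho> by simp
    finally have "norm K * exp (t * \<rho>) \<le> M"
      by (simp add: t_def exp_diff field_simps)
    moreover have "norm K * (1 + t * \<rho>) \<le> norm K * exp (t * \<rho>)"
      using exp_ge_add_one_self by (intro mult_left_mono) auto
    ultimately show ?thesis by linarith
  qed
  define \<rho> where "\<rho> = 1 + \<bar>M\<bar> / (norm K * t)"
  have "norm K * (1 + t * \<rho>) = norm K + norm K * t + \<bar>M\<bar>"
    unfolding \<rho>_def using t0 K0 by (simp add: field_simps)
  moreover have "\<rho> \<ge> 1" unfolding \<rho>_def using t0 K0 by simp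
  moreover have "norm K * t > 0" using K0 t0 by simp
  ultimately show False using main[of \<rho>] K0 abs_ge_self[of M] by linarith
qed

lemma norm_Laguerre_le_normalized:
  fixes \<beta> :: "nat \<Rightarrow> real" and C z :: complex and M :: nat
  assumes nn: "\<And>j. \<beta> j \<ge> 0" and sm: "summable \<beta>" and \<alpha>: "\<alpha> \<ge> 0"
    and large: "\<And>j. j < J \<Longrightarrow> \<beta> j \<ge> 1" and bdd: "\<And>j. J \<le> j \<Longrightarrow> \<beta> j \<le> B"
  shows "norm (C * z ^ l * exp (of_real \<alpha> * z) * (\<Prod>j. 1 + of_real (\<beta> j) * z))
    \<le> norm (C * (\<Prod>j<J. of_real (\<beta> j))) * (1 + B) ^ M * (1 + norm z) ^ (l + J + M)
      * exp ((\<alpha> + tail_sum \<beta> (J + M)) * norm z)"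
proof -
  have B: "B \<ge> 0" using bdd[of J] nn[of J] by simp
  have "norm (C * z ^ l * exp (of_real \<alpha> * z) * (\<Prod>j. 1 + of_real (\<beta> j) * z))
      \<le> norm C * norm z ^ l * exp (\<alpha> * norm z) *
        ((\<Prod>j<J+M. norm (1 + of_real (\<beta> j) * z)) * exp (norm z * tail_sum \<beta> (J+M)))"
    unfolding norm_mult norm_power using norm_exp[of "of_real \<alpha> * z"] \<alpha>
    by (intro mult_mono mult_left_mono norm_prodinf_le_partial_exp[OF nn sm]) (auto simp: norm_mult)
  also have "\<dots> = (norm C * (\<Prod>j<J+M. norm (1 + of_real (\<beta> j) * z))) * norm z ^ l
      * exp ((\<alpha> + tail_sum \<beta> (J+M)) * norm z)"
    by (simp add: exp_add[symmetric] algebra_simps)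
  also have "norm C * (\<Prod>j<J+M. norm (1 + of_real (\<beta> j) * z))
      = norm (C * (\<Prod>j<J. of_real (\<beta> j))) * (\<Prod>j<J. norm (z + of_real (inverse (\<beta> j))))
        * (\<Prod>i<M. norm (1 + of_real (\<beta> (J+i)) * z))"
    by (rule norm_prod_linear_factors_scaled) (use large in force)
  also have "\<dots> \<le> norm (C * (\<Prod>j<J. of_real (\<beta> j))) * (1 + norm z) ^ J * ((1 + B) * (1 + norm z)) ^ M"
    using prod_norm_plus_inverse_le[of J \<beta> z, OF large] nn bdd
    by (intro mult_mono mult_left_mono prod_norm_linear_factors_le_power) (auto intro!: prod_nonneg)
  also have "norm z ^ l \<le> (1 + norm z) ^ l" by (intro power_mono) auto
  finally show ?thesis
    using B by (simp add: power_add power_mult_distrib mult_ac mult_left_mono mult_right_mono)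
qed

lemma norm_Laguerre_minus_normalized_le:
  fixes \<beta> :: "nat \<Rightarrow> real" and C z :: complex and M :: nat
  assumes nn: "\<And>j. \<beta> j \<ge> 0" and dec: "\<And>j. \<beta> (Suc j) \<le> \<beta> j" and sm: "summable \<beta>"
    and nz: "\<And>j. j < J \<Longrightarrow> \<beta> j \<noteq> 0"
  defines "Tm \<equiv> tail_sum \<beta> J - (\<Sum>i<M. \<beta> (J+i))"
  shows "norm (C * z ^ l * exp (of_real \<alpha> * z) * (\<Prod>j. 1 + of_real (\<beta> j) * z)
      - (C * (\<Prod>j<J. of_real (\<beta> j))) * z ^ l * exp (of_real \<alpha> * z) * (\<Prod>j<J. z + of_real (inverse (\<beta> j)))
        * (\<Prod>i<M. 1 + of_real (\<beta> (J+i)) * z) * exp (z * of_real Tm))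
    \<le> norm (C * (\<Prod>j<J. of_real (\<beta> j))) * norm z ^ l * norm (exp (of_real \<alpha> * z))
      * norm (\<Prod>j<J. z + of_real (inverse (\<beta> j))) * (\<Prod>i<M. norm (1 + of_real (\<beta> (J+i)) * z))
      * (norm z ^ 2 * \<beta> (J+M) * Tm * exp (2 * norm z * Tm))"
proof -
  define E where "E = C * z ^ l * exp (of_real \<alpha> * z)"
  define P where "P = (\<Prod>j. 1 + of_real (\<beta> j) * z)"
  define Q where "Q = (\<Prod>j<J+M. 1 + of_real (\<beta> j) * z)"
  define Kn where "Kn = C * (\<Prod>j<J. of_real (\<beta> j))"
  define Pinv where "Pinv = (\<Prod>j<J. z + of_real (inverse (\<beta> j)))"
  define Pm where "Pm = (\<Prod>i<M. 1 + of_real (\<beta> (J+i)) * z)"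
  have TT: "tail_sum \<beta> (J+M) = Tm" unfolding Tm_def tail_sum_add ..
  have CQ: "C * Q = Kn * Pinv * Pm"
  proof -
    have "(\<Prod>j<J. 1 + of_real (\<beta> j) * z) = (\<Prod>j<J. of_real (\<beta> j)) * Pinv"
      unfolding Pinv_def by (rule prod_linear_factors_scaled) (use nz in auto)
    thus ?thesis unfolding Q_def prod_lessThan_add Kn_def Pm_def by (simp only: mult_ac)
  qed
  have "Kn * z ^ l * exp (of_real \<alpha> * z) * Pinv * Pm * exp (z * of_real Tm)
      = (Kn * Pinv * Pm) * (z ^ l * exp (of_real \<alpha> * z) * exp (z * of_real Tm))"
    by (simp only: mult_ac)
  also have "\<dots> = E * (Q * exp (z * of_real Tm))"
    unfolding CQ[symmetric] E_def by (simp only: mult_ac)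
  finally have eq: "Kn * z ^ l * exp (of_real \<alpha> * z) * Pinv * Pm * exp (z * of_real Tm)
      = E * (Q * exp (z * of_real Tm))" .
  have "norm (E * P - Kn * z ^ l * exp (of_real \<alpha> * z) * Pinv * Pm * exp (z * of_real Tm))
      = norm E * norm (P - Q * exp (z * of_real (tail_sum \<beta> (J+M))))"
    unfolding eq TT by (simp only: right_diff_distrib[symmetric] norm_mult)
  also have "\<dots> \<le> norm E * ((\<Prod>j<J+M. norm (1 + of_real (\<beta> j) * z))
      * (norm z ^ 2 * \<beta> (J+M) * Tm * exp (2 * norm z * Tm)))"
    using norm_prodinf_minus_partial_exp_le[OF nn dec sm, of z "J+M"]
    unfolding P_def Q_def TT by (intro mult_left_mono) auto
  also have "\<dots> = (norm E * (\<Prod>j<J+M. norm (1 + of_real (\<beta> j) * z)))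
      * (norm z ^ 2 * \<beta> (J+M) * Tm * exp (2 * norm z * Tm))"
    by (rule mult.assoc[symmetric])
  also have "norm E * (\<Prod>j<J+M. norm (1 + of_real (\<beta> j) * z))
      = norm z ^ l * norm (exp (of_real \<alpha> * z)) * norm (C * Q)"
    unfolding E_def Q_def by (simp add: norm_mult norm_power prod_norm mult_ac)
  also have "norm (C * Q) = norm Kn * norm Pinv * (\<Prod>i<M. norm (1 + of_real (\<beta> (J+i)) * z))"
    unfolding CQ Pm_def by (simp add: norm_mult prod_norm)
  finally show ?thesis
    unfolding E_def P_def Kn_def Pinv_def Pm_def by (simp only: mult_ac)
qed

text \<open>\<open>-1 / \<beta> n j\<close> is a zero of \<open>g n\<close>: the first \<open>J\<close> of them tend to the origin, the others stay
  at distance at least \<open>1 / B\<close> from it, and \<open>K\<close> is the limit of the leading coefficient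
  renormalized by the first \<open>J\<close> zeros.\<close>

locale normalized_Laguerre_seq =
  fixes g :: "nat \<Rightarrow> complex \<Rightarrow> complex" and C :: "nat \<Rightarrow> complex" and l :: "nat \<Rightarrow> nat"
    and \<alpha> :: "nat \<Rightarrow> real" and \<beta> :: "nat \<Rightarrow> nat \<Rightarrow> real" and f :: "complex \<Rightarrow> complex"
    and l0 J :: nat and B :: real and K :: complex and \<alpha>' T :: real and b :: "nat \<Rightarrow> real"
  assumes seq: "Laguerre_seq g C l \<alpha> \<beta> f"
    and l_const: "\<And>n. l n = l0"
    and divergent: "\<And>j. j < J \<Longrightarrow> filterlim (\<lambda>n. \<beta> n j) at_top sequentially"
    and bounded: "\<And>n j. J \<le> j \<Longrightarrow> \<beta> n j \<le> B" and B_nonneg: "B \<ge> 0"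
    and LIMSEQ_K: "(\<lambda>n. C n * (\<Prod>j<J. of_real (\<beta> n j))) \<longlonglongrightarrow> K"
    and LIMSEQ_alpha: "\<alpha> \<longlonglongrightarrow> \<alpha>'"
    and LIMSEQ_T: "(\<lambda>n. tail_sum (\<beta> n) J) \<longlonglongrightarrow> T"
    and LIMSEQ_b: "\<And>i. (\<lambda>n. \<beta> n (J+i)) \<longlonglongrightarrow> b i"
begin

lemma b_nonneg: "b i \<ge> 0"
  by (rule LIMSEQ_le_const[OF LIMSEQ_b]) (use Laguerre_seqD(2)[OF seq] in auto)

lemma b_decreasing: "b (Suc i) \<le> b i"
proof (rule LIMSEQ_le[OF LIMSEQ_b LIMSEQ_b])
  show "\<exists>N. \<forall>n\<ge>N. \<beta> n (J + Suc i) \<le> \<beta> n (J + i)" using Laguerre_seqD(3)[OF seq] by auto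
qed

lemma alpha'_nonneg: "\<alpha>' \<ge> 0"
  by (rule LIMSEQ_le_const[OF LIMSEQ_alpha]) (use Laguerre_seqD(1)[OF seq] in auto)

lemma sum_b_le: "(\<Sum>i<M. b i) \<le> T"
proof (rule LIMSEQ_le[OF tendsto_sum[OF LIMSEQ_b] LIMSEQ_T])
  show "\<exists>N. \<forall>n\<ge>N. (\<Sum>i<M. \<beta> n (J + i)) \<le> tail_sum (\<beta> n) J"
  proof (intro exI allI impI)
    fix n
    have "tail_sum (\<beta> n) (J + M) \<ge> 0" using Laguerre_seqD[OF seq, of n] by (intro tail_sum_nonneg) auto
    thus "(\<Sum>i<M. \<beta> n (J + i)) \<le> tail_sum (\<beta> n) J" unfolding tail_sum_add by simp
  qed
qed

lemma summable_b: "summable b"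
  by (rule summableI_nonneg_bounded[OF b_nonneg sum_b_le])

lemma suminf_b_le: "(\<Sum>i. b i) \<le> T"
  by (rule suminf_le_const[OF summable_b sum_b_le])

lemma norm_limit_minus_partial_le:
  "norm (f z - K * z ^ l0 * exp (of_real \<alpha>' * z) * z ^ J * (\<Prod>i<M. 1 + of_real (b i) * z)
      * exp (z * of_real (T - (\<Sum>i<M. b i))))
    \<le> norm K * norm z ^ l0 * norm (exp (of_real \<alpha>' * z)) * norm z ^ J * (\<Prod>i<M. norm (1 + of_real (b i) * z))
      * (norm z ^ 2 * b M * (T - (\<Sum>i<M. b i)) * exp (2 * norm z * (T - (\<Sum>i<M. b i))))"
proof -
  define TM where "TM = T - (\<Sum>i<M. b i)"
  define Kn where "Kn n = C n * (\<Prod>j<J. of_real (\<beta> n j))" for n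
  define Pinv where "Pinv n = (\<Prod>j<J. z + of_real (inverse (\<beta> n j)))" for n
  define Pm where "Pm n = (\<Prod>i<M. 1 + of_real (\<beta> n (J+i)) * z)" for n
  define Pmn where "Pmn n = (\<Prod>i<M. norm (1 + of_real (\<beta> n (J+i)) * z))" for n
  define Tm where "Tm n = tail_sum (\<beta> n) J - (\<Sum>i<M. \<beta> n (J+i))" for n
  define LHS where "LHS n = norm (g n z - Kn n * z ^ l0 * exp (of_real (\<alpha> n) * z) * Pinv n * Pm n * exp (z * of_real (Tm n)))" for n
  define RHS where "RHS n = norm (Kn n) * norm z ^ l0 * norm (exp (of_real (\<alpha> n) * z)) * norm (Pinv n) * Pmn n
      * (norm z ^ 2 * \<beta> n (J+M) * Tm n * exp (2 * norm z * Tm n))" for n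
  have inv0: "(\<lambda>n. (of_real (inverse (\<beta> n j)) :: complex)) \<longlonglongrightarrow> 0" if "j \<in> {..<J}" for j
  proof -
    have "(\<lambda>n. inverse (\<beta> n j)) \<longlonglongrightarrow> 0" using that by (intro tendsto_inverse_0_at_top divergent) auto
    hence "(\<lambda>n. (of_real (inverse (\<beta> n j)) :: complex)) \<longlonglongrightarrow> of_real 0" by (rule tendsto_of_real)
    thus ?thesis by (simp only: of_real_0)
  qed
  have Pinv_lim: "Pinv \<longlonglongrightarrow> z ^ J"
  proof -
    have "Pinv \<longlonglongrightarrow> (\<Prod>j<J. z + 0)" unfolding Pinv_def
      by (intro tendsto_prod tendsto_add tendsto_const inv0)
    thus ?thesis by simp
  qed
  have LHS_lim: "LHS \<longlonglongrightarrow> norm (f z - K * z ^ l0 * exp (of_real \<alpha>' * z) * z ^ J * (\<Prod>i<M. 1 + of_real (b i) * z) * exp (z * of_real TM))"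
    unfolding LHS_def Kn_def Pm_def Tm_def TM_def
    by (intro tendsto_intros Laguerre_seqD(6)[OF seq] LIMSEQ_K Pinv_lim LIMSEQ_alpha LIMSEQ_T LIMSEQ_b)
  have RHS_lim: "RHS \<longlonglongrightarrow> norm K * norm z ^ l0 * norm (exp (of_real \<alpha>' * z)) * norm (z ^ J) * (\<Prod>i<M. norm (1 + of_real (b i) * z))
    * (norm z ^ 2 * b M * TM * exp (2 * norm z * TM))"
    unfolding RHS_def Kn_def Pmn_def Tm_def TM_def
    by (intro tendsto_intros LIMSEQ_K Pinv_lim LIMSEQ_alpha LIMSEQ_T LIMSEQ_b)
  have "eventually (\<lambda>n. \<forall>j\<in>{..<J}. \<beta> n j > 0) sequentially"
    by (intro eventually_ball_finite ballI) (use divergent in \<open>auto simp: filterlim_at_top_dense\<close>)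
  hence "eventually (\<lambda>n. LHS n \<le> RHS n) sequentially"
  proof eventually_elim
    case (elim n)
    have gz: "g n z = C n * z ^ l0 * exp (of_real (\<alpha> n) * z) * (\<Prod>j. 1 + of_real (\<beta> n j) * z)"
      using Laguerre_seqD(5)[OF seq, of n z] l_const[of n] by simp
    have nz: "\<And>j. j < J \<Longrightarrow> \<beta> n j \<noteq> 0" using elim by (metis lessThan_iff less_irrefl)
    show ?case
      unfolding LHS_def RHS_def Kn_def Pinv_def Pm_def Pmn_def Tm_def gz
      by (rule norm_Laguerre_minus_normalized_le[OF _ _ _ nz]) (use Laguerre_seqD[OF seq] in auto)
  qed
  from tendsto_le[OF _ RHS_lim LHS_lim this] show ?thesis by (simp add: norm_power TM_def)
qed

lemma limit_factorization:
  "f z = K * z ^ (l0 + J) * exp (of_real (\<alpha>' + T - (\<Sum>i. b i)) * z) * (\<Prod>i. 1 + of_real (b i) * z)"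
proof -
  define TM where "TM M = T - (\<Sum>i<M. b i)" for M
  have TM0: "TM M \<ge> 0" for M using sum_b_le[of M] by (simp add: TM_def)
  have TMT: "TM M \<le> T" for M using b_nonneg by (simp add: TM_def sum_nonneg)
  define E where "E M = K * z ^ l0 * exp (of_real \<alpha>' * z) * z ^ J * (\<Prod>i<M. 1 + of_real (b i) * z) * exp (z * of_real (TM M))" for M
  define D where "D = norm K * norm z ^ l0 * norm (exp (of_real \<alpha>' * z)) * norm z ^ J * exp (norm z * T) * (norm z ^ 2 * T * exp (2 * norm z * T))"
  have approx: "norm (f z - E M) \<le> D * b M" for M
  proof -
    have p: "(\<Prod>i<M. norm (1 + of_real (b i) * z)) \<le> exp (norm z * T)"
      using prod_norm_linear_factors_le_exp[where b=b and A="{..<M}" and z=z] b_nonneg sum_b_le[of M]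
      by (meson exp_le_cancel_iff mult_left_mono norm_ge_zero order_trans)
    have q: "norm z ^ 2 * b M * TM M * exp (2 * norm z * TM M) \<le> norm z ^ 2 * T * exp (2 * norm z * T) * b M"
    proof -
      have "exp (2 * norm z * TM M) \<le> exp (2 * norm z * T)" using TMT[of M] by (simp add: mult_left_mono)
      hence "TM M * exp (2 * norm z * TM M) \<le> T * exp (2 * norm z * T)"
        using TM0[of M] TMT[of M] by (intro mult_mono) auto
      hence "norm z ^ 2 * b M * (TM M * exp (2 * norm z * TM M)) \<le> norm z ^ 2 * b M * (T * exp (2 * norm z * T))"
        using b_nonneg[of M] by (intro mult_left_mono) auto
      thus ?thesis by (simp add: mult_ac)
    qed
    have "norm (f z - E M) \<le> norm K * norm z ^ l0 * norm (exp (of_real \<alpha>' * z)) * norm z ^ J * (\<Prod>i<M. norm (1 + of_real (b i) * z))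
      * (norm z ^ 2 * b M * TM M * exp (2 * norm z * TM M))"
      unfolding E_def TM_def by (rule norm_limit_minus_partial_le)
    also have "\<dots> \<le> norm K * norm z ^ l0 * norm (exp (of_real \<alpha>' * z)) * norm z ^ J * exp (norm z * T)
      * (norm z ^ 2 * T * exp (2 * norm z * T) * b M)"
    proof (rule mult_mono[OF mult_left_mono[OF p] q])
      show "0 \<le> norm z ^ 2 * b M * TM M * exp (2 * norm z * TM M)" using b_nonneg[of M] TM0[of M] by simp
    qed auto
    also have "\<dots> = D * b M" unfolding D_def by (simp add: mult_ac)
    finally show ?thesis .
  qed
  define F where "F = K * z ^ l0 * exp (of_real \<alpha>' * z) * z ^ J * (\<Prod>i. 1 + of_real (b i) * z) * exp (z * of_real (T - (\<Sum>i. b i)))"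
  have "E \<longlonglongrightarrow> F"
    unfolding E_def TM_def F_def
    by (intro tendsto_intros LIMSEQ_prod_linear_factors b_nonneg summable_b summable_LIMSEQ)
  hence "(\<lambda>M. norm (f z - E M)) \<longlonglongrightarrow> norm (f z - F)"
    by (intro tendsto_intros)
  moreover have "(\<lambda>M. D * b M) \<longlonglongrightarrow> D * 0"
    by (intro tendsto_intros summable_LIMSEQ_zero[OF summable_b])
  ultimately have "norm (f z - F) \<le> D * 0"
    using approx by (intro tendsto_le[OF _ _ _ always_eventually]) auto
  hence "f z = F" by simp
  also have "F = K * z ^ (l0 + J) * (exp (of_real \<alpha>' * z) * exp (z * of_real (T - (\<Sum>i. b i)))) * (\<Prod>i. 1 + of_real (b i) * z)"
    unfolding F_def by (simp add: power_add mult_ac)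
  also have "exp (of_real \<alpha>' * z) * exp (z * of_real (T - (\<Sum>i. b i))) = exp (of_real (\<alpha>' + T - (\<Sum>i. b i)) * z)"
    by (simp add: exp_add[symmetric] algebra_simps)
  finally show ?thesis .
qed

lemma limit_in_Laguerre: "f \<in> Laguerre"
  unfolding Laguerre_def
proof (intro CollectI exI conjI allI)
  show "0 \<le> \<alpha>' + T - (\<Sum>i. b i)" using alpha'_nonneg suminf_b_le by simp
  show "b (Suc j) \<le> b j" "0 \<le> b (Suc j)" for j by (rule b_decreasing, rule b_nonneg)
  show "summable b" by (rule summable_b)
  show "f z = K * z ^ (l0 + J) * exp (of_real (\<alpha>' + T - (\<Sum>i. b i)) * z) * (\<Prod>j. 1 + of_real (b j) * z)" for z
    by (rule limit_factorization)
qed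

lemma eventually_growth_bound:
  assumes s: "\<alpha>' + T - (\<Sum>i. b i) < s"
  shows "\<exists>A d. A \<ge> 0 \<and> eventually (\<lambda>n. \<forall>z. norm (g n z) \<le> A * (1 + norm z) ^ d * exp (s * norm z)) sequentially"
proof -
  have "(\<lambda>M. \<alpha>' + (T - (\<Sum>i<M. b i))) \<longlonglongrightarrow> \<alpha>' + (T - (\<Sum>i. b i))"
    by (intro tendsto_intros summable_LIMSEQ summable_b)
  moreover have "\<alpha>' + (T - (\<Sum>i. b i)) < s" using s by simp
  ultimately have "eventually (\<lambda>M. \<alpha>' + (T - (\<Sum>i<M. b i)) < s) sequentially"
    by (rule order_tendstoD(2))
  then obtain M where M: "\<alpha>' + (T - (\<Sum>i<M. b i)) < s" by (auto simp: eventually_at_top_linorder)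
  have "(\<lambda>n. \<alpha> n + (tail_sum (\<beta> n) J - (\<Sum>i<M. \<beta> n (J+i)))) \<longlonglongrightarrow> \<alpha>' + (T - (\<Sum>i<M. b i))"
    by (intro tendsto_intros LIMSEQ_alpha LIMSEQ_T LIMSEQ_b)
  hence e1: "eventually (\<lambda>n. \<alpha> n + tail_sum (\<beta> n) (J + M) < s) sequentially"
    using M unfolding tail_sum_add by (intro order_tendstoD(2)) auto
  have e2: "eventually (\<lambda>n. \<forall>j\<in>{..<J}. \<beta> n j \<ge> 1) sequentially"
    by (intro eventually_ball_finite ballI) (use divergent in \<open>auto simp: filterlim_at_top\<close>)
  have e3: "eventually (\<lambda>n. norm (C n * (\<Prod>j<J. of_real (\<beta> n j))) < norm K + 1) sequentially"
    using order_tendstoD(2)[OF tendsto_norm[OF LIMSEQ_K], of "norm K + 1"] by simp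
  define A where "A = (norm K + 1) * (1 + B) ^ M"
  have "eventually (\<lambda>n. \<forall>z. norm (g n z) \<le> A * (1 + norm z) ^ (l0 + J + M) * exp (s * norm z)) sequentially"
    using e1 e2 e3
  proof eventually_elim
    case (elim n)
    show ?case
    proof
      fix z :: complex
      have "norm (g n z) = norm (C n * z ^ l0 * exp (of_real (\<alpha> n) * z) * (\<Prod>j. 1 + of_real (\<beta> n j) * z))"
        using Laguerre_seqD(5)[OF seq, of n z] l_const[of n] by simp
      also have "\<dots> \<le> norm (C n * (\<Prod>j<J. of_real (\<beta> n j))) * (1 + B) ^ M * (1 + norm z) ^ (l0 + J + M)
          * exp ((\<alpha> n + tail_sum (\<beta> n) (J + M)) * norm z)"
        by (rule norm_Laguerre_le_normalized) (use Laguerre_seqD[OF seq] elim(2) bounded in auto)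
      also have "\<dots> \<le> A * (1 + norm z) ^ (l0 + J + M) * exp (s * norm z)"
        unfolding A_def using elim(1,3) B_nonneg
        by (intro mult_mono mult_right_mono) (auto intro: mult_right_mono)
      finally show "norm (g n z) \<le> A * (1 + norm z) ^ (l0 + J + M) * exp (s * norm z)" .
    qed
  qed
  moreover have "A \<ge> 0" unfolding A_def using B_nonneg by simp
  ultimately show ?thesis by blast
qed

end

lemma Laguerre_seq_bounded_subseq:
  assumes H: "Laguerre_seq g C l \<alpha> \<beta> f" and fhol: "f holomorphic_on UNIV" and fnz: "\<exists>z. f z \<noteq> 0"
  obtains \<phi> :: "nat \<Rightarrow> nat" and l0 J B R where "strict_mono \<phi>" "\<And>n. l (\<phi> n) = l0"
    "\<And>j. j < J \<Longrightarrow> filterlim (\<lambda>n. \<beta> (\<phi> n) j) at_top sequentially"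
    "B \<ge> 0" "\<And>n j. J \<le> j \<Longrightarrow> \<beta> (\<phi> n) j \<le> B"
    "\<And>n. norm (C (\<phi> n) * (\<Prod>j<J. of_real (\<beta> (\<phi> n) j))) \<le> R" "\<And>n. \<bar>\<alpha> (\<phi> n)\<bar> \<le> R"
    "\<And>n. \<bar>tail_sum (\<beta> (\<phi> n)) J\<bar> \<le> R" "\<And>n i. \<bar>\<beta> (\<phi> n) (J + i)\<bar> \<le> R"
proof -
  obtain c \<delta> N where lowc: "c > 0" and lowd: "\<delta> > 0"
    and low: "\<And>\<rho>. 0 < \<rho> \<Longrightarrow> \<rho> < \<delta> \<Longrightarrow> c * \<rho> ^ N \<le> norm (f (of_real \<rho>))"
    using entire_power_lower_bound[OF fhol fnz] by blast
  obtain \<phi> :: "nat \<Rightarrow> nat" and l0 J B where \<phi>: "strict_mono \<phi>" and lc: "\<And>n. l (\<phi> n) = l0"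
    and div1: "\<And>j. j < J \<Longrightarrow> filterlim (\<lambda>n. \<beta> (\<phi> n) j) at_top sequentially"
    and B0: "B \<ge> 0" and Bj: "\<And>n j. J \<le> j \<Longrightarrow> \<beta> (\<phi> n) j \<le> B"
    using Laguerre_seq_separating_subseq[OF H lowc lowd low] by blast
  note H1 = Laguerre_seq_subseq[OF H \<phi>]
  define \<rho>0 where "\<rho>0 = \<delta> / 2"
  have r0: "\<rho>0 > 0" "\<rho>0 < \<delta>" using lowd by (auto simp: \<rho>0_def)
  have fr0: "f (of_real \<rho>0) \<noteq> 0"
  proof -
    have "0 < c * \<rho>0 ^ N" using lowc r0 by simp
    also have "\<dots> \<le> norm (f (of_real \<rho>0))" using low r0 by blast
    finally show ?thesis by auto
  qed
  have "\<exists>SB KB. eventually (\<lambda>n. \<alpha> (\<phi> n) + tail_sum (\<beta> (\<phi> n)) J \<le> SB \<and>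
      norm (C (\<phi> n) * (\<Prod>j<J. of_real (\<beta> (\<phi> n) j))) \<le> KB) sequentially"
    by (rule Laguerre_seq_exponent_bounded[OF H1 r0(1) fr0]) (use Bj B0 lc in auto)
  then obtain SB KB n0 where n0: "\<And>n. n \<ge> n0 \<Longrightarrow> \<alpha> (\<phi> n) + tail_sum (\<beta> (\<phi> n)) J \<le> SB \<and>
      norm (C (\<phi> n) * (\<Prod>j<J. of_real (\<beta> (\<phi> n) j))) \<le> KB"
    by (auto simp: eventually_at_top_linorder)
  define idx where "idx n = \<phi> (n + n0)" for n
  have H2: "Laguerre_seq (\<lambda>n. g (idx n)) (\<lambda>n. C (idx n)) (\<lambda>n. l (idx n)) (\<lambda>n. \<alpha> (idx n)) (\<lambda>n. \<beta> (idx n)) f"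
    unfolding idx_def using Laguerre_seq_shift[OF H1, of n0] by simp
  have bounds: "norm (C (idx n) * (\<Prod>j<J. of_real (\<beta> (idx n) j))) \<le> KB + SB + B"
    "\<bar>\<alpha> (idx n)\<bar> \<le> KB + SB + B" "\<bar>tail_sum (\<beta> (idx n)) J\<bar> \<le> KB + SB + B"
    "\<bar>\<beta> (idx n) (J + i)\<bar> \<le> KB + SB + B" for n i
  proof -
    have bnd: "\<alpha> (idx n) + tail_sum (\<beta> (idx n)) J \<le> SB" "norm (C (idx n) * (\<Prod>j<J. of_real (\<beta> (idx n) j))) \<le> KB"
      using n0[of "n + n0"] unfolding idx_def by auto
    have "\<alpha> (idx n) \<ge> 0" "tail_sum (\<beta> (idx n)) J \<ge> 0" "0 \<le> \<beta> (idx n) (J + i)" "\<beta> (idx n) (J + i) \<le> B"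
      using Laguerre_seqD[OF H2, of n] tail_sum_nonneg[of "\<beta> (idx n)" J] Bj unfolding idx_def by auto
    with bnd B0 norm_ge_zero[of "C (idx n) * (\<Prod>j<J. of_real (\<beta> (idx n) j))"]
    show "norm (C (idx n) * (\<Prod>j<J. of_real (\<beta> (idx n) j))) \<le> KB + SB + B"
      "\<bar>\<alpha> (idx n)\<bar> \<le> KB + SB + B" "\<bar>tail_sum (\<beta> (idx n)) J\<bar> \<le> KB + SB + B"
      "\<bar>\<beta> (idx n) (J + i)\<bar> \<le> KB + SB + B" by linarith+
  qed
  have "strict_mono idx" using \<phi> by (auto simp: strict_mono_def idx_def)
  moreover have "filterlim (\<lambda>n. \<beta> (idx n) j) at_top sequentially" if "j < J" for j
  proof -
    have "strict_mono (\<lambda>n. n + n0)" by (auto simp: strict_mono_def)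
    from filterlim_compose[OF div1[OF that] filterlim_subseq[OF this]] show ?thesis by (simp add: idx_def)
  qed
  ultimately show ?thesis
    using that[of idx l0 J B "KB + SB + B"] bounds lc B0 Bj by (auto simp: idx_def)
qed

lemma Laguerre_seq_normalizing_subseq:
  assumes H: "Laguerre_seq g C l \<alpha> \<beta> f" and fhol: "f holomorphic_on UNIV" and fnz: "\<exists>z. f z \<noteq> 0"
  shows "\<exists>\<phi> l0 J B K \<alpha>' T b. strict_mono \<phi> \<and> normalized_Laguerre_seq (\<lambda>n. g (\<phi> n)) (\<lambda>n. C (\<phi> n))
    (\<lambda>n. l (\<phi> n)) (\<lambda>n. \<alpha> (\<phi> n)) (\<lambda>n. \<beta> (\<phi> n)) f l0 J B K \<alpha>' T b"
proof -
  obtain \<phi> :: "nat \<Rightarrow> nat" and l0 J B R where \<phi>: "strict_mono \<phi>" and lc: "\<And>n. l (\<phi> n) = l0"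
    and div: "\<And>j. j < J \<Longrightarrow> filterlim (\<lambda>n. \<beta> (\<phi> n) j) at_top sequentially"
    and B0: "B \<ge> 0" and Bj: "\<And>n j. J \<le> j \<Longrightarrow> \<beta> (\<phi> n) j \<le> B"
    and bounds: "\<And>n. norm (C (\<phi> n) * (\<Prod>j<J. of_real (\<beta> (\<phi> n) j))) \<le> R" "\<And>n. \<bar>\<alpha> (\<phi> n)\<bar> \<le> R"
      "\<And>n. \<bar>tail_sum (\<beta> (\<phi> n)) J\<bar> \<le> R" "\<And>n i. \<bar>\<beta> (\<phi> n) (J + i)\<bar> \<le> R"
    using Laguerre_seq_bounded_subseq[OF H fhol fnz] by blast
  obtain \<psi> K \<alpha>' T b where \<psi>: "strict_mono \<psi>"
    and K_lim: "(\<lambda>n. C (\<phi> (\<psi> n)) * (\<Prod>j<J. of_real (\<beta> (\<phi> (\<psi> n)) j))) \<longlonglongrightarrow> K"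
    and a_lim: "(\<lambda>n. \<alpha> (\<phi> (\<psi> n))) \<longlonglongrightarrow> \<alpha>'" and T_lim: "(\<lambda>n. tail_sum (\<beta> (\<phi> (\<psi> n))) J) \<longlonglongrightarrow> T"
    and b_lim: "\<And>i. (\<lambda>n. \<beta> (\<phi> (\<psi> n)) (J + i)) \<longlonglongrightarrow> b i"
    using bounded_parameters_convergent_subseq[where K="\<lambda>n. C (\<phi> n) * (\<Prod>j<J. of_real (\<beta> (\<phi> n) j))"
        and a="\<lambda>n. \<alpha> (\<phi> n)" and T="\<lambda>n. tail_sum (\<beta> (\<phi> n)) J" and b="\<lambda>n i. \<beta> (\<phi> n) (J + i)"] bounds
    by blast
  have "filterlim (\<lambda>n. \<beta> (\<phi> (\<psi> n)) j) at_top sequentially" if "j < J" for j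
    using filterlim_compose[OF div[OF that] filterlim_subseq[OF \<psi>]] by simp
  hence "normalized_Laguerre_seq (\<lambda>n. g (\<phi> (\<psi> n))) (\<lambda>n. C (\<phi> (\<psi> n))) (\<lambda>n. l (\<phi> (\<psi> n)))
      (\<lambda>n. \<alpha> (\<phi> (\<psi> n))) (\<lambda>n. \<beta> (\<phi> (\<psi> n))) f l0 J B K \<alpha>' T b"
    using Laguerre_seq_subseq[OF Laguerre_seq_subseq[OF H \<phi>] \<psi>] lc Bj B0 K_lim a_lim T_lim b_lim
    by (intro normalized_Laguerre_seq.intro) auto
  moreover have "strict_mono (\<lambda>n. \<phi> (\<psi> n))"
    using \<phi> \<psi> by (auto simp: strict_mono_def)
  ultimately show ?thesis by blast
qed

lemma Laguerre_seq_subseq_Anorm_bounded: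
  assumes gL: "\<And>n. g n \<in> Laguerre_a a" and conv: "\<And>z. (\<lambda>n. g n z) \<longlonglongrightarrow> f z"
    and fA: "f \<in> A_space a" and fnz: "\<exists>z. f z \<noteq> 0" and a0: "a \<ge> 0"
  shows "f \<in> Laguerre \<and> (\<exists>\<psi>::nat\<Rightarrow>nat. strict_mono \<psi> \<and>
    (\<forall>b>a. \<exists>G. eventually (\<lambda>i. Anorm b (g (\<psi> i)) \<le> ereal G) sequentially))"
proof -
  have hol: "g n holomorphic_on UNIV" for n using gL[of n] by (simp add: Laguerre_a_def A_space_def entire_def)
  have fhol: "f holomorphic_on UNIV" using fA by (simp add: A_space_def entire_def)
  have "g n \<in> Laguerre" for n using gL[of n] by (simp add: Laguerre_a_def)
  then obtain C l \<alpha> \<beta> where H: "Laguerre_seq g C l \<alpha> \<beta> f"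
    using Laguerre_seqI[of g, OF _ conv] by blast
  obtain \<psi> l0 J B K \<alpha>' T b where \<psi>: "strict_mono \<psi>" and normalized: "normalized_Laguerre_seq (\<lambda>n. g (\<psi> n))
      (\<lambda>n. C (\<psi> n)) (\<lambda>n. l (\<psi> n)) (\<lambda>n. \<alpha> (\<psi> n)) (\<lambda>n. \<beta> (\<psi> n)) f l0 J B K \<alpha>' T b"
    using Laguerre_seq_normalizing_subseq[OF H fhol fnz] by blast
  interpret N: normalized_Laguerre_seq "\<lambda>n. g (\<psi> n)" "\<lambda>n. C (\<psi> n)" "\<lambda>n. l (\<psi> n)"
    "\<lambda>n. \<alpha> (\<psi> n)" "\<lambda>n. \<beta> (\<psi> n)" f l0 J B K \<alpha>' T b
    by (fact normalized)
  have type_le: "\<alpha>' + T - (\<Sum>i. b i) \<le> a"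
    by (rule Laguerre_exponent_le[OF N.limit_factorization N.b_nonneg N.summable_b fA a0 fnz])
  have "\<exists>G. eventually (\<lambda>i. Anorm b' (g (\<psi> i)) \<le> ereal G) sequentially" if ba: "b' > a" for b'
  proof -
    obtain A d where "A \<ge> 0" and "eventually (\<lambda>n. \<forall>z. norm (g (\<psi> n) z)
        \<le> A * (1 + norm z) ^ d * exp ((a + b') / 2 * norm z)) sequentially"
      using N.eventually_growth_bound[of "(a + b') / 2"] type_le ba by auto
    thus ?thesis using hol ba a0 by (intro Anorm_eventually_bounded_of_growth[where s="(a + b') / 2"]) auto
  qed
  thus ?thesis using N.limit_in_Laguerre \<psi> by blast
qed

section \<open>Boundedness and convergence in \<open>A_space a\<close>\<close>

lemma Laguerre_seq_A_bounded:
  assumes a0: "a \<ge> 0" and gL: "\<And>n. g n \<in> Laguerre_a a" and conv: "\<And>z. (\<lambda>n. g n z) \<longlonglongrightarrow> f z"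
    and fA: "f \<in> A_space a" and fnz: "\<exists>z. f z \<noteq> 0"
  shows "A_bounded a (range g)"
  unfolding A_bounded_def
proof (intro conjI allI impI)
  show "range g \<subseteq> A_space a" using gL by (auto simp: Laguerre_a_def)
  fix b assume "b > a"
  have "(SUP n. Anorm b (g n)) < \<infinity>"
  proof (rule SUP_ereal_finite_if_subseqs_bounded)
    show "Anorm b (g n) < \<infinity>" for n
      using gL[of n] \<open>b > a\<close> by (simp add: Laguerre_a_def A_space_def)
    fix r :: "nat \<Rightarrow> nat" assume "strict_mono r"
    hence "(\<lambda>n. g (r n) z) \<longlonglongrightarrow> f z" for z
      using LIMSEQ_subseq_LIMSEQ[OF conv] by (simp add: o_def)
    with Laguerre_seq_subseq_Anorm_bounded[of "\<lambda>n. g (r n)", OF gL this fA fnz a0] \<open>b > a\<close>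
    show "\<exists>s G. strict_mono s \<and> eventually (\<lambda>i. Anorm b (g (r (s i))) \<le> ereal G) sequentially"
      by blast
  qed
  thus "(SUP h\<in>range g. Anorm b h) < \<infinity>" by (simp add: image_image)
qed

lemma A_converges_if_A_bounded:
  assumes a0: "a \<ge> 0" and bdd: "A_bounded a (range fs)" and fA: "f \<in> A_space a"
    and unif: "uniform_limit (cball 0 1) fs f sequentially"
  shows "A_converges a fs f"
  unfolding A_converges_def
proof (intro allI impI)
  fix b assume "b > a"
  define c where "c = (a + b) / 2"
  have c: "c > a" "c > 0" "c < b" using \<open>b > a\<close> a0 by (auto simp: c_def)
  have hol: "fs n holomorphic_on UNIV" for n using bdd by (auto simp: A_bounded_def A_space_def entire_def)
  have fhol: "f holomorphic_on UNIV" using fA by (simp add: A_space_def entire_def)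
  obtain M1 where M1: "\<And>n k. norm ((deriv ^^ k) (fs n) 0) \<le> M1 * c ^ k"
    using A_bounded_coeff_bound[OF bdd c(1,2)] by blast
  obtain M2 where M2: "\<And>k. norm ((deriv ^^ k) f 0) \<le> M2 * c ^ k"
    using Anorm_finite_imp_coeff_bound[of c f] fA c by (auto simp: A_space_def)
  have coeff: "norm ((deriv ^^ k) (\<lambda>z. fs n z - f z) 0) \<le> (M1 + M2) * c ^ k" for n k
  proof -
    have "norm ((deriv ^^ k) (\<lambda>z. fs n z - f z) 0) \<le> norm ((deriv ^^ k) (fs n) 0) + norm ((deriv ^^ k) f 0)"
      unfolding higher_deriv_diff[OF hol fhol open_UNIV UNIV_I] by (rule norm_triangle_ineq4)
    also have "\<dots> \<le> (M1 + M2) * c ^ k"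
      using M1[where n=n and k=k] M2[of k] by (simp add: distrib_right)
    finally show ?thesis .
  qed
  show "(\<lambda>n. Anorm b (\<lambda>z. fs n z - f z)) \<longlonglongrightarrow> 0"
  proof (rule LIMSEQ_ereal_zero_if_eventually_le[OF Anorm_nonneg])
    fix \<epsilon> :: real assume "\<epsilon> > 0"
    have "(\<lambda>K. (M1 + M2) * (c / b) ^ K) \<longlonglongrightarrow> (M1 + M2) * 0"
      using c by (intro tendsto_intros LIMSEQ_power_zero) auto
    then obtain K where K: "(M1 + M2) * (c / b) ^ K < \<epsilon>"
      using \<open>\<epsilon> > 0\<close> by (metis (lifting) LIMSEQ_D diff_zero dual_order.refl mult_zero_right real_norm_def abs_less_iff)
    define D where "D = (\<Sum>k<K. fact k / b ^ k) + 1"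
    have D: "D > 0" using c by (auto simp: D_def intro!: add_nonneg_pos sum_nonneg)
    have "eventually (\<lambda>n. \<forall>z\<in>cball 0 1. dist (fs n z) (f z) < \<epsilon> / D) sequentially"
      using \<open>\<epsilon> > 0\<close> D by (intro uniform_limitD[OF unif]) auto
    thus "eventually (\<lambda>n. Anorm b (\<lambda>z. fs n z - f z) \<le> ereal \<epsilon>) sequentially"
    proof eventually_elim
      case (elim n)
      have "Anorm b (\<lambda>z. fs n z - f z) \<le> ereal (max ((\<Sum>k<K. fact k / b ^ k) * (\<epsilon> / D)) ((M1 + M2) * (c / b) ^ K))"
      proof (rule Anorm_le_of_circle_and_coeff_bound[OF _ _ coeff c(2)])
        show "(\<lambda>z. fs n z - f z) holomorphic_on UNIV" using hol fhol by (intro holomorphic_intros)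
        show "norm (fs n z - f z) \<le> \<epsilon> / D" if "norm z = 1" for z
          using elim that by (auto simp: dist_norm less_imp_le)
      qed (use c in auto)
      also have "(\<Sum>k<K. fact k / b ^ k) * (\<epsilon> / D) \<le> \<epsilon>"
        using D \<open>\<epsilon> > 0\<close> by (simp add: D_def field_simps)
      finally show ?case using K by (simp add: max_def)
    qed
  qed
qed

theorem theorem1p2:
  fixes a :: real and fs :: "nat \<Rightarrow> complex \<Rightarrow> complex" and f :: "complex \<Rightarrow> complex"
  assumes "a \<ge> 0"
    and "\<And>n. fs n \<in> Laguerre_a a"
    and "\<And>K. compact K \<Longrightarrow> uniform_limit K fs f sequentially"
    and "f \<in> A_space a"
    and "\<exists>z. f z \<noteq> 0"
  shows "A_bounded a (range fs) \<and> A_converges a fs f \<and> f \<in> Laguerre"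
proof -
  have conv: "(\<lambda>n. fs n z) \<longlonglongrightarrow> f z" for z
    using tendsto_uniform_limitI[OF assms(3)[of "{z}"]] by simp
  have bdd: "A_bounded a (range fs)"
    by (rule Laguerre_seq_A_bounded[OF assms(1,2) conv assms(4,5)])
  moreover have "A_converges a fs f"
    by (rule A_converges_if_A_bounded[OF assms(1) bdd assms(4) assms(3)[OF compact_cball]])
  moreover have "f \<in> Laguerre"
    using Laguerre_seq_subseq_Anorm_bounded[OF assms(2) conv assms(4,5,1)] by blast
  ultimately show ?thesis by blast
qed

end
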